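(* Let $f$ satisfy the standing assumption described in the context and let $\alpha,\beta>0$. Run Cubic-GDA with $0<\epsilon'\le\frac{\alpha L_1}{\beta L_G}$, $0<\eta_x\le(9L_\Phi+18\alpha+28\beta)^{-1}$, $\eta_y=\frac{2}{L_1+\mu}$, and inner iteration numbers satisfying $$N_0\ge\kappa\ln\Big(\frac{L_1\|y_0-y^*(x_0)\|}{2\beta\epsilon'^2}\Big),\qquad N_t\ge\kappa\ln\Big(\frac{2L_1\alpha\|s_{t-1}\|+L_1(\alpha+L_G\kappa)\|s_t\|}{L_G\beta\epsilon'^2}\Big)\ (t\ge1).$$ Let $T'=\min\{t\ge1:\ \max(\|s_{t-1}\|,\|s_t\|)\le\epsilon'\}$ ($T'=\infty$ if no such $t$) and $H_t:=\Phi(x_t)+(L_\Phi+2\alpha+3\beta)\|s_t\|^3$. Then for every integer $t$ with $0\le t\le T'-2$, $$H_{t+1}-H_t\le-(L_\Phi+\alpha+\beta)(\|s_{t+1}\|^3+\|s_t\|^3).$$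
   Context: Standing assumption: $f:\mathbb{R}^m\times\mathbb{R}^n\to\mathbb{R}$ is twice continuously differentiable; $\nabla f$ is $L_1$-Lipschitz; $y\mapsto f(x,y)$ is $\mu$-strongly concave for each $x$ ($\mu>0$); the Jacobian blocks $\nabla_{11}f,\nabla_{12}f,\nabla_{21}f,\nabla_{22}f$ are $L_2$-Lipschitz in $(x,y)$; $\Phi(x):=\max_y f(x,y)$ is bounded below with compact sub-level sets. Let $\kappa=L_1/\mu$, $y^*(x)=\arg\max_y f(x,y)$, $L_G=L_2(1+\kappa)^2$, $L_\Phi=L_2(1+\kappa)^3$, $G(x,y)=\big[\nabla_{11} f - \nabla_{12} f (\nabla_{22} f)^{-1} \nabla_{21} f\big](x,y)$ ($\nabla_{12}f$ the Jacobian of $\nabla_1 f$ in $y$, $\nabla_{21}f$ that of $\nabla_2 f$ in $x$). Cubic-GDA: given $x_0\in\mathbb{R}^m,y_0\in\mathbb{R}^n$, $\eta_x,\eta_y>0$, $\epsilon'>0$, integers $N_t\ge0$; convention $\|s_0\|:=\epsilon'$. For $t=0,1,2,\dots$: $\widetilde y_0=y_t$, $\widetilde y_{k+1}=\widetilde y_k+\eta_y\nabla_2 f(x_t,\widetilde y_k)$ for $k=0,\dots,N_t-1$, $y_{t+1}=\widetilde y_{N_t}$; $s_{t+1}$ a global minimizer over $s\in\mathbb{R}^m$ of $\nabla_1 f(x_t,y_{t+1})^\top s+\tfrac12 s^\top G(x_t,y_{t+1})s+\tfrac{1}{6\eta_x}\|s\|^3$; $x_{t+1}=x_t+s_{t+1}$.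 *)

theory Defs
  imports "HOL-Analysis.Analysis" "HOL-Library.Extended_Nat"
begin

definition Phi :: "('a \<Rightarrow> 'b \<Rightarrow> real) \<Rightarrow> 'a \<Rightarrow> real" where
  "Phi f x = (SUP y. f x y)"

definition ystar :: "('a \<Rightarrow> 'b \<Rightarrow> real) \<Rightarrow> 'a \<Rightarrow> 'b" where
  "ystar f x = (THE y. \<forall>y'. f x y' \<le> f x y)"

definition standing_assumption ::
  "(real^'m \<Rightarrow> real^'n \<Rightarrow> real) \<Rightarrow>
   (real^'m \<Rightarrow> real^'n \<Rightarrow> real^'m) \<Rightarrow> (real^'m \<Rightarrow> real^'n \<Rightarrow> real^'n) \<Rightarrow>
   (real^'m \<Rightarrow> real^'n \<Rightarrow> real^'m^'m) \<Rightarrow> (real^'m \<Rightarrow> real^'n \<Rightarrow> real^'n^'m) \<Rightarrow>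
   (real^'m \<Rightarrow> real^'n \<Rightarrow> real^'m^'n) \<Rightarrow> (real^'m \<Rightarrow> real^'n \<Rightarrow> real^'n^'n) \<Rightarrow>
   real \<Rightarrow> real \<Rightarrow> real \<Rightarrow> bool" where
  "standing_assumption f g1 g2 H11 H12 H21 H22 L1 L2 \<mu> \<longleftrightarrow>
     \<comment> \<open>f is differentiable with gradient (g1, g2)\<close>
     (\<forall>x y. ((\<lambda>p. f (fst p) (snd p)) has_derivative
               (\<lambda>h. g1 x y \<bullet> fst h + g2 x y \<bullet> snd h)) (at (x, y))) \<and>
     \<comment> \<open>the gradient is differentiable with Jacobian blocks H11, H12, H21, H22\<close>
     (\<forall>x y. ((\<lambda>p. g1 (fst p) (snd p)) has_derivative
               (\<lambda>h. H11 x y *v fst h + H12 x y *v snd h)) (at (x, y))) \<and>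
     (\<forall>x y. ((\<lambda>p. g2 (fst p) (snd p)) has_derivative
               (\<lambda>h. H21 x y *v fst h + H22 x y *v snd h)) (at (x, y))) \<and>
     \<comment> \<open>twice continuously differentiable\<close>
     continuous_on UNIV (\<lambda>p. H11 (fst p) (snd p)) \<and>
     continuous_on UNIV (\<lambda>p. H12 (fst p) (snd p)) \<and>
     continuous_on UNIV (\<lambda>p. H21 (fst p) (snd p)) \<and>
     continuous_on UNIV (\<lambda>p. H22 (fst p) (snd p)) \<and>
     \<comment> \<open>gradient is L1-Lipschitz\<close>
     0 \<le> L1 \<and>
     (\<forall>x y x' y'. norm ((g1 x y, g2 x y) - (g1 x' y', g2 x' y'))
                    \<le> L1 * norm ((x, y) - (x', y'))) \<and>
     \<comment> \<open>mu-strong concavity in y\<close>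
     0 < \<mu> \<and>
     (\<forall>x y y' t. 0 \<le> t \<and> t \<le> 1 \<longrightarrow>
        t * f x y + (1 - t) * f x y' + \<mu> / 2 * t * (1 - t) * (norm (y - y'))\<^sup>2
          \<le> f x (t *\<^sub>R y + (1 - t) *\<^sub>R y')) \<and>
     \<comment> \<open>Jacobian blocks are L2-Lipschitz (operator norm)\<close>
     0 \<le> L2 \<and>
     (\<forall>x y x' y'. onorm (\<lambda>v. (H11 x y - H11 x' y') *v v) \<le> L2 * norm ((x, y) - (x', y'))) \<and>
     (\<forall>x y x' y'. onorm (\<lambda>v. (H12 x y - H12 x' y') *v v) \<le> L2 * norm ((x, y) - (x', y'))) \<and>
     (\<forall>x y x' y'. onorm (\<lambda>v. (H21 x y - H21 x' y') *v v) \<le> L2 * norm ((x, y) - (x', y'))) \<and>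
     (\<forall>x y x' y'. onorm (\<lambda>v. (H22 x y - H22 x' y') *v v) \<le> L2 * norm ((x, y) - (x', y'))) \<and>
     \<comment> \<open>Phi bounded below with compact sub-level sets\<close>
     (\<exists>c. \<forall>x. c \<le> Phi f x) \<and>
     (\<forall>a. compact {x. Phi f x \<le> a})"

definition Gmat where
  "Gmat H11 H12 H21 H22 x y = H11 x y - H12 x y ** matrix_inv (H22 x y) ** H21 x y"

definition cubic_model :: "real^'m \<Rightarrow> real^'m^'m \<Rightarrow> real \<Rightarrow> real^'m \<Rightarrow> real" where
  "cubic_model g G \<eta> s = g \<bullet> s + 1/2 * (s \<bullet> (G *v s)) + 1 / (6 * \<eta>) * norm s ^ 3"

definition Tprime :: "real \<Rightarrow> (nat \<Rightarrow> real^'m) \<Rightarrow> enat" where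
  "Tprime \<epsilon> s = (if \<exists>t\<ge>1. max (norm (s (t-1))) (norm (s t)) \<le> \<epsilon>
                  then enat (LEAST t. t \<ge> 1 \<and> max (norm (s (t-1))) (norm (s t)) \<le> \<epsilon>)
                  else \<infinity>)"

end

theory Submission
  imports Defs
begin

(* Along the iterates, Phi = f(., ystar(.)) obeys the cubic upper bound
     Phi(x + s) <= Phi(x) + g1(x, ystar x) . s + 1/2 s . G(x, ystar x) s + LPhi/6 |s|^3,
   because ystar is kappa-Lipschitz and, along the direction (s, ystar(x + s) - ystar x), the
   quadratic form of the Hessian is bounded by the Schur complement G. Replacing ystar(x_t) by the
   inner-loop output y_(t+1) costs L1 d |s| + LG/2 d |s|^2, where d = |y_(t+1) - ystar(x_t)|, and the
   optimality of the cubic step bounds the model value by -|s|^3/(4 eta_x). Gradient ascent with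
   step 2/(L1 + mu) contracts the distance to ystar by the factor (L1 - mu)/(L1 + mu), so the
   prescribed inner iteration numbers keep L1 d <= 2 beta eps'^2, by induction on t, as long as
   t + 1 < T'. Before T' one of |s_t|, |s_(t+1)| exceeds eps', and this absorbs the error terms
   into multiples alpha, beta of |s_t|^3 + |s_(t+1)|^3. *)

section \<open>Taylor estimates on the real line\<close>

lemma le_of_forall_le_add_mult:
  fixes X Y C :: real
  assumes "\<And>h. 0 < h \<Longrightarrow> h \<le> 1 \<Longrightarrow> X \<le> Y + C * h"
  shows "X \<le> Y"
proof (rule ccontr)
  assume "\<not> X \<le> Y"
  define h where "h = min 1 ((X - Y) / (2 * (\<bar>C\<bar> + 1)))"
  have h: "0 < h" "h \<le> 1" using \<open>\<not> X \<le> Y\<close> by (auto simp: h_def)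
  have "C * h \<le> \<bar>C\<bar> * h" using h by (simp add: mult_right_mono)
  also have "\<dots> \<le> (\<bar>C\<bar> + 1) * ((X - Y) / (2 * (\<bar>C\<bar> + 1)))"
    using h by (intro mult_mono) (auto simp: h_def)
  also have "\<dots> = X / 2 - Y / 2" by (simp add: field_simps)
  finally show False using assms[OF h] \<open>\<not> X \<le> Y\<close> by linarith
qed

lemma taylor_linear_upper:
  fixes \<phi> \<phi>' :: "real \<Rightarrow> real"
  assumes "\<And>t. (\<phi> has_real_derivative \<phi>' t) (at t)"
    and "\<And>t. 0 \<le> t \<Longrightarrow> t \<le> 1 \<Longrightarrow> \<phi>' t - \<phi>' 0 \<le> K * t"
  shows "\<phi> 1 \<le> \<phi> 0 + \<phi>' 0 + K / 2"
proof -
  let ?\<psi> = "\<lambda>t. \<phi> t - t * \<phi>' 0 - K / 2 * t ^ 2"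
  have "?\<psi> 1 \<le> ?\<psi> 0"
  proof (rule DERIV_nonpos_imp_nonincreasing[of 0 1])
    fix t :: real assume "0 \<le> t" "t \<le> 1"
    then show "\<exists>d. (?\<psi> has_real_derivative d) (at t) \<and> d \<le> 0"
      using assms by (auto intro!: exI[of _ "\<phi>' t - \<phi>' 0 - K * t"] derivative_eq_intros)
  qed simp
  then show ?thesis by simp
qed

lemma taylor_quadratic_upper:
  fixes \<phi> \<phi>' \<phi>'' :: "real \<Rightarrow> real"
  assumes d: "\<And>t. (\<phi> has_real_derivative \<phi>' t) (at t)"
    and d2: "\<And>t. (\<phi>' has_real_derivative \<phi>'' t) (at t)"
    and K: "\<And>t. 0 \<le> t \<Longrightarrow> t \<le> 1 \<Longrightarrow> \<phi>'' t - \<phi>'' 0 \<le> K * t"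
  shows "\<phi> 1 \<le> \<phi> 0 + \<phi>' 0 + \<phi>'' 0 / 2 + K / 6"
proof -
  have \<phi>': "\<phi>' t \<le> \<phi>' 0 + t * \<phi>'' 0 + K / 2 * t ^ 2" if "0 \<le> t" "t \<le> 1" for t
  proof -
    let ?\<chi> = "\<lambda>u. \<phi>' u - u * \<phi>'' 0 - K / 2 * u ^ 2"
    have "?\<chi> t \<le> ?\<chi> 0"
    proof (rule DERIV_nonpos_imp_nonincreasing[of 0 t])
      fix u :: real assume "0 \<le> u" "u \<le> t"
      then show "\<exists>d. (?\<chi> has_real_derivative d) (at u) \<and> d \<le> 0"
        using K[of u] that by (auto intro!: exI[of _ "\<phi>'' u - \<phi>'' 0 - K * u"] derivative_eq_intros d2)
    qed (use that in simp)
    then show ?thesis by simp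
  qed
  let ?\<psi> = "\<lambda>t. \<phi> t - t * \<phi>' 0 - t ^ 2 / 2 * \<phi>'' 0 - K / 6 * t ^ 3"
  have "?\<psi> 1 \<le> ?\<psi> 0"
  proof (rule DERIV_nonpos_imp_nonincreasing[of 0 1])
    fix t :: real assume "0 \<le> t" "t \<le> 1"
    then show "\<exists>d. (?\<psi> has_real_derivative d) (at t) \<and> d \<le> 0"
      using \<phi>'[of t]
      by (auto intro!: exI[of _ "\<phi>' t - \<phi>' 0 - t * \<phi>'' 0 - K / 2 * t ^ 2"] derivative_eq_intros d
          simp: power2_eq_square power3_eq_cube algebra_simps)
  qed simp
  then show ?thesis by simp
qed

lemma taylor_linear_abs:
  fixes \<phi> \<phi>' :: "real \<Rightarrow> real"
  assumes d: "\<And>t. (\<phi> has_real_derivative \<phi>' t) (at t)"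
    and K: "\<And>t. 0 \<le> t \<Longrightarrow> t \<le> 1 \<Longrightarrow> \<bar>\<phi>' t - \<phi>' 0\<bar> \<le> K * t"
  shows "\<bar>\<phi> 1 - \<phi> 0 - \<phi>' 0\<bar> \<le> K / 2"
proof -
  have "\<phi> 1 \<le> \<phi> 0 + \<phi>' 0 + K / 2"
    by (rule taylor_linear_upper[OF d]) (use K in force)
  moreover have "- \<phi> 1 \<le> - \<phi> 0 + - \<phi>' 0 + K / 2"
    by (rule taylor_linear_upper[where \<phi>' = "\<lambda>t. - \<phi>' t"])
      (use K in \<open>auto intro!: derivative_eq_intros d simp: abs_le_iff\<close>)
  ultimately show ?thesis by linarith
qed

lemma taylor_quadratic_abs:
  fixes \<phi> \<phi>' \<phi>'' :: "real \<Rightarrow> real"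
  assumes d: "\<And>t. (\<phi> has_real_derivative \<phi>' t) (at t)"
    and d2: "\<And>t. (\<phi>' has_real_derivative \<phi>'' t) (at t)"
    and K: "\<And>t. 0 \<le> t \<Longrightarrow> t \<le> 1 \<Longrightarrow> \<bar>\<phi>'' t - \<phi>'' 0\<bar> \<le> K * t"
  shows "\<bar>\<phi> 1 - \<phi> 0 - \<phi>' 0 - \<phi>'' 0 / 2\<bar> \<le> K / 6"
proof -
  have "\<phi> 1 \<le> \<phi> 0 + \<phi>' 0 + \<phi>'' 0 / 2 + K / 6"
    by (rule taylor_quadratic_upper[OF d d2]) (use K in force)
  moreover have "- \<phi> 1 \<le> - \<phi> 0 + - \<phi>' 0 + - \<phi>'' 0 / 2 + K / 6"
    by (rule taylor_quadratic_upper[where \<phi>' = "\<lambda>t. - \<phi>' t" and \<phi>'' = "\<lambda>t. - \<phi>'' t"])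
      (use K in \<open>auto intro!: derivative_eq_intros d d2 simp: abs_le_iff\<close>)
  ultimately show ?thesis by linarith
qed

section \<open>Smooth strongly convex functions\<close>

lemma power2_norm_diff: "norm (z - y :: 'a::real_inner) ^ 2 = norm z ^ 2 - 2 * (z \<bullet> y) + norm y ^ 2"
  by (simp add: power2_norm_eq_inner inner_diff_left inner_diff_right inner_commute)

lemma convex_smooth_gradient_gap:
  fixes P :: "'a::real_inner \<Rightarrow> real" and DP :: "'a \<Rightarrow> 'a"
  assumes convex: "\<And>y z. P y + DP y \<bullet> (z - y) \<le> P z"
    and smooth: "\<And>y z. P z \<le> P y + DP y \<bullet> (z - y) + L / 2 * norm (z - y) ^ 2"
    and "0 \<le> L"
  shows "norm (DP b - DP a) ^ 2 \<le> 2 * L * (P b - P a - DP a \<bullet> (b - a))"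
proof -
  define w where "w = DP b - DP a"
  define \<Delta> where "\<Delta> = P b - P a - DP a \<bullet> (b - a)"
  have step: "t * norm w ^ 2 - L / 2 * t ^ 2 * norm w ^ 2 \<le> \<Delta>" for t
  proof -
    define z where "z = b - t *\<^sub>R w"
    have "P a + DP a \<bullet> (z - a) \<le> P z" by (rule convex)
    moreover have "P z \<le> P b + DP b \<bullet> (z - b) + L / 2 * norm (z - b) ^ 2" by (rule smooth)
    moreover have "norm (z - b) ^ 2 = t ^ 2 * norm w ^ 2"
      by (simp add: z_def power_mult_distrib)
    moreover have "DP b \<bullet> (z - b) - DP a \<bullet> (z - a) = - t * norm w ^ 2 - DP a \<bullet> (b - a)"
      by (simp add: z_def w_def inner_diff_right inner_diff_left power2_norm_eq_inner algebra_simps)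
    ultimately show ?thesis unfolding \<Delta>_def by (simp add: algebra_simps)
  qed
  show ?thesis
  proof (cases "L = 0")
    case True
    have "norm w ^ 2 \<le> 0"
    proof (rule ccontr)
      assume "\<not> norm w ^ 2 \<le> 0"
      with step[of "(\<bar>\<Delta>\<bar> + 1) / norm w ^ 2"] True show False by simp
    qed
    then show ?thesis unfolding w_def by (simp add: True)
  next
    case False
    with \<open>0 \<le> L\<close> have "0 < L" by simp
    have "1 / L * norm w ^ 2 - L / 2 * (1 / L) ^ 2 * norm w ^ 2 = norm w ^ 2 / (2 * L)"
      using \<open>0 < L\<close> by (simp add: field_simps power2_eq_square)
    with step[of "1 / L"] have "norm w ^ 2 / (2 * L) \<le> \<Delta>" by simp
    with \<open>0 < L\<close> show ?thesis unfolding w_def \<Delta>_def by (simp add: field_simps)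
  qed
qed

lemma convex_smooth_cocoercive:
  fixes P :: "'a::real_inner \<Rightarrow> real" and DP :: "'a \<Rightarrow> 'a"
  assumes "\<And>y z. P y + DP y \<bullet> (z - y) \<le> P z"
    and "\<And>y z. P z \<le> P y + DP y \<bullet> (z - y) + L / 2 * norm (z - y) ^ 2"
    and "0 \<le> L"
  shows "norm (DP b - DP a) ^ 2 \<le> L * ((DP b - DP a) \<bullet> (b - a))"
proof -
  have "norm (DP b - DP a) ^ 2 \<le> 2 * L * (P b - P a - DP a \<bullet> (b - a))"
    and "norm (DP a - DP b) ^ 2 \<le> 2 * L * (P a - P b - DP b \<bullet> (a - b))"
    by (rule convex_smooth_gradient_gap[OF assms])+
  moreover have "norm (DP a - DP b) = norm (DP b - DP a)" by (rule norm_minus_commute)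
  moreover have "(P b - P a - DP a \<bullet> (b - a)) + (P a - P b - DP b \<bullet> (a - b)) = (DP b - DP a) \<bullet> (b - a)"
    by (simp add: inner_diff_left inner_diff_right algebra_simps)
  ultimately show ?thesis by (simp add: algebra_simps)
qed

text \<open>Co-coercivity of the convex, \<open>(L - \<mu>)\<close>-smooth function \<open>h - \<mu>/2 \<parallel>\<cdot>\<parallel>\<^sup>2\<close> yields
  this interpolation inequality.\<close>

lemma strongly_convex_smooth_interpolation:
  fixes h :: "'a::real_inner \<Rightarrow> real" and Dh :: "'a \<Rightarrow> 'a"
  assumes strongly_convex: "\<And>y z. h y + Dh y \<bullet> (z - y) + \<mu> / 2 * norm (z - y) ^ 2 \<le> h z"
    and smooth: "\<And>y z. h z \<le> h y + Dh y \<bullet> (z - y) + L / 2 * norm (z - y) ^ 2"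
    and "\<mu> \<le> L"
  shows "norm (Dh y - Dh z) ^ 2 + L * \<mu> * norm (y - z) ^ 2 \<le> (L + \<mu>) * ((Dh y - Dh z) \<bullet> (y - z))"
proof -
  define P where "P z = h z - \<mu> / 2 * norm z ^ 2" for z
  define DP where "DP z = Dh z - \<mu> *\<^sub>R z" for z
  have "P y + DP y \<bullet> (z - y) \<le> P z" for y z
  proof -
    have "P y + DP y \<bullet> (z - y) = h y + Dh y \<bullet> (z - y) + \<mu> / 2 * norm (z - y) ^ 2 - \<mu> / 2 * norm z ^ 2"
      unfolding P_def DP_def power2_norm_diff
      by (simp add: inner_diff_left inner_diff_right power2_norm_eq_inner inner_commute algebra_simps)
    then show ?thesis using strongly_convex[of y z] unfolding P_def by linarith
  qed
  moreover have "P z \<le> P y + DP y \<bullet> (z - y) + (L - \<mu>) / 2 * norm (z - y) ^ 2" for y z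
  proof -
    have "P y + DP y \<bullet> (z - y) + (L - \<mu>) / 2 * norm (z - y) ^ 2
        = h y + Dh y \<bullet> (z - y) + L / 2 * norm (z - y) ^ 2 - \<mu> / 2 * norm z ^ 2"
      unfolding P_def DP_def power2_norm_diff
      by (simp add: inner_diff_left inner_diff_right power2_norm_eq_inner inner_commute field_simps)
    then show ?thesis using smooth[where y = y and z = z] unfolding P_def by linarith
  qed
  ultimately have "norm (DP y - DP z) ^ 2 \<le> (L - \<mu>) * ((DP y - DP z) \<bullet> (y - z))"
    using \<open>\<mu> \<le> L\<close> by (intro convex_smooth_cocoercive) auto
  moreover define a u where "a = Dh y - Dh z" and "u = y - z"
  moreover have "DP y - DP z = a - \<mu> *\<^sub>R u"
    by (simp add: DP_def a_def u_def algebra_simps)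
  ultimately have "norm (a - \<mu> *\<^sub>R u) ^ 2 \<le> (L - \<mu>) * ((a - \<mu> *\<^sub>R u) \<bullet> u)"
    by simp
  moreover have "norm (a - \<mu> *\<^sub>R u) ^ 2 = norm a ^ 2 - 2 * \<mu> * (a \<bullet> u) + \<mu> ^ 2 * norm u ^ 2"
    by (simp add: power2_norm_diff power_mult_distrib)
  moreover have "(L - \<mu>) * ((a - \<mu> *\<^sub>R u) \<bullet> u)
      = L * (a \<bullet> u) - L * \<mu> * norm u ^ 2 - \<mu> * (a \<bullet> u) + \<mu> ^ 2 * norm u ^ 2"
    by (simp add: inner_diff_left algebra_simps power2_eq_square flip: power2_norm_eq_inner)
  ultimately show ?thesis unfolding a_def[symmetric] u_def[symmetric] by (simp add: distrib_right)
qed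

lemma gradient_step_contraction:
  fixes h :: "'a::real_inner \<Rightarrow> real" and Dh :: "'a \<Rightarrow> 'a"
  assumes "\<And>y z. h y + Dh y \<bullet> (z - y) + \<mu> / 2 * norm (z - y) ^ 2 \<le> h z"
    and "\<And>y z. h z \<le> h y + Dh y \<bullet> (z - y) + L / 2 * norm (z - y) ^ 2"
    and "0 < \<mu>" "\<mu> \<le> L" and "Dh y\<^sub>0 = 0"
  shows "norm (y - (2 / (L + \<mu>)) *\<^sub>R Dh y - y\<^sub>0) \<le> (L - \<mu>) / (L + \<mu>) * norm (y - y\<^sub>0)"
proof -
  define S where "S = L + \<mu>"
  have "0 < S" using assms by (simp add: S_def)
  define u where "u = y - y\<^sub>0"
  define w where "w = Dh y"
  have interp: "norm w ^ 2 + L * \<mu> * norm u ^ 2 \<le> S * (w \<bullet> u)"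
    using strongly_convex_smooth_interpolation[OF assms(1,2,4), of y y\<^sub>0] \<open>Dh y\<^sub>0 = 0\<close>
    by (simp add: S_def u_def w_def)
  have "S ^ 2 * norm (u - (2 / S) *\<^sub>R w) ^ 2 = S ^ 2 * norm u ^ 2 - 4 * (S * (w \<bullet> u)) + 4 * norm w ^ 2"
    using \<open>0 < S\<close> unfolding power2_norm_diff
    by (simp add: power_mult_distrib inner_commute power2_eq_square field_simps)
  also have "\<dots> \<le> S ^ 2 * norm u ^ 2 - 4 * L * \<mu> * norm u ^ 2"
    using interp by simp
  also have "\<dots> = (L - \<mu>) ^ 2 * norm u ^ 2"
    by (simp add: S_def power2_eq_square algebra_simps)
  also have "\<dots> = S ^ 2 * ((L - \<mu>) / S * norm u) ^ 2"
    using \<open>0 < S\<close> by (simp add: power_divide power_mult_distrib)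
  finally have "norm (u - (2 / S) *\<^sub>R w) ^ 2 \<le> ((L - \<mu>) / S * norm u) ^ 2"
    using \<open>0 < S\<close> by simp
  then have "norm (u - (2 / S) *\<^sub>R w) \<le> (L - \<mu>) / S * norm u"
    by (rule power2_le_imp_le) (use assms \<open>0 < S\<close> in simp)
  moreover have "y - (2 / (L + \<mu>)) *\<^sub>R Dh y - y\<^sub>0 = u - (2 / S) *\<^sub>R w"
    by (simp add: u_def w_def S_def)
  ultimately show ?thesis by (simp only: S_def u_def)
qed

lemma contraction_factor_power_bound:
  fixes L \<mu> A :: real
  assumes "0 < \<mu>" "\<mu> \<le> L" "0 < A" and N: "L / \<mu> * ln A \<le> real N"
  shows "((L - \<mu>) / (L + \<mu>)) ^ N * A \<le> 1"
proof (cases "L = \<mu>")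
  case True
  with assms have "N = 0 \<Longrightarrow> A \<le> 1" by simp
  with True show ?thesis by (cases N) auto
next
  case False
  with assms have "\<mu> < L" by simp
  define \<rho> where "\<rho> = (L - \<mu>) / (L + \<mu>)"
  have "0 < \<rho>" using \<open>\<mu> < L\<close> assms by (simp add: \<rho>_def)
  have "ln \<rho> \<le> \<rho> - 1" using \<open>0 < \<rho>\<close> by (rule ln_le_minus_one)
  also have "\<dots> = - 2 * \<mu> / (L + \<mu>)" using assms by (simp add: \<rho>_def field_simps)
  also have "\<dots> \<le> - \<mu> / L" using \<open>\<mu> < L\<close> assms by (simp add: field_simps)
  finally have "real N * ln \<rho> \<le> real N * (- \<mu> / L)"
    by (intro mult_left_mono) auto
  moreover have "ln A \<le> \<mu> / L * real N"
    using mult_left_mono[OF N, of "\<mu> / L"] assms \<open>\<mu> < L\<close> by simp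
  ultimately have "ln (\<rho> ^ N * A) \<le> 0"
    using \<open>0 < \<rho>\<close> \<open>0 < A\<close> by (simp add: ln_mult ln_realpow field_simps)
  then show ?thesis using \<open>0 < \<rho>\<close> \<open>0 < A\<close> by (simp add: \<rho>_def)
qed

section \<open>The cubic-regularized model\<close>

lemma cubic_model_minimizer_bound:
  fixes g :: "real^'m" and G :: "real^'m^'m"
  assumes "0 < \<eta>" and min: "\<And>u. cubic_model g G \<eta> s \<le> cubic_model g G \<eta> u"
  shows "g \<bullet> s + 1 / 2 * (s \<bullet> (G *v s)) \<le> - 1 / (4 * \<eta>) * norm s ^ 3"
proof -
  define a b r where "a = g \<bullet> s" and "b = s \<bullet> (G *v s)" and "r = norm s"
  define \<phi> where "\<phi> \<tau> = \<tau> * a + \<tau> ^ 2 * b / 2 + 1 / (6 * \<eta>) * \<tau> ^ 3 * r ^ 3" for \<tau>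
  have model_ray: "cubic_model g G \<eta> (\<tau> *\<^sub>R s) = \<tau> * a + \<tau> ^ 2 * b / 2 + 1 / (6 * \<eta>) * \<bar>\<tau>\<bar> ^ 3 * r ^ 3" for \<tau>
    unfolding cubic_model_def a_def b_def r_def
    by (simp add: matrix_vector_mult_scaleR power_mult_distrib power2_eq_square algebra_simps)
  have min_ray: "\<phi> 1 \<le> \<tau> * a + \<tau> ^ 2 * b / 2 + 1 / (6 * \<eta>) * \<bar>\<tau>\<bar> ^ 3 * r ^ 3" for \<tau>
    using min[of "\<tau> *\<^sub>R s"] model_ray[of \<tau>] model_ray[of 1] by (simp add: \<phi>_def)
  have "(\<phi> has_real_derivative (a + b + 1 / (2 * \<eta>) * r ^ 3)) (at 1)"
    unfolding \<phi>_def using \<open>0 < \<eta>\<close> by (auto intro!: derivative_eq_intros simp: field_simps)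
  moreover have "\<phi> 1 \<le> \<phi> \<tau>" if "\<bar>1 - \<tau>\<bar> < 1 / 2" for \<tau>
  proof -
    from that have "\<bar>\<tau>\<bar> = \<tau>" by linarith
    with min_ray[of \<tau>] show ?thesis by (simp only: \<phi>_def)
  qed
  ultimately have stationary: "a + b + 1 / (2 * \<eta>) * r ^ 3 = 0"
    by (intro DERIV_local_min[of \<phi> _ 1 "1 / 2"]) auto
  have "a \<le> 0" using min_ray[of "-1"] by (simp add: \<phi>_def)
  have "a + 1 / 2 * b = a / 2 + (a + b + 1 / (2 * \<eta>) * r ^ 3) / 2 - 1 / (4 * \<eta>) * r ^ 3"
    using \<open>0 < \<eta>\<close> by (simp add: field_simps)
  also have "\<dots> \<le> - 1 / (4 * \<eta>) * r ^ 3" using stationary \<open>a \<le> 0\<close> by simp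
  finally show ?thesis unfolding a_def b_def r_def .
qed

section \<open>Minimax problems under the standing assumption\<close>

lemma le_divide_of_mult_square_le:
  fixes a b c :: real
  assumes "c * a ^ 2 \<le> a * b" and "0 < c" "0 \<le> a" "0 \<le> b"
  shows "a \<le> b / c"
proof (cases "a = 0")
  case False
  with assms have "c * a \<le> b" by (simp add: power2_eq_square mult.assoc mult.left_commute[of c])
  with assms show ?thesis by (simp add: field_simps)
qed (use assms in simp)

lemma inner_matrix_vector_le_onorm:
  fixes A :: "real^'a^'b"
  shows "\<bar>u \<bullet> (A *v v)\<bar> \<le> onorm ((*v) A) * norm u * norm v"
proof -
  have "\<bar>u \<bullet> (A *v v)\<bar> \<le> norm u * norm (A *v v)" by (rule Cauchy_Schwarz_ineq2)
  also have "\<dots> \<le> norm u * (onorm ((*v) A) * norm v)"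
    using onorm[OF matrix_vector_mul_bounded_linear[of A], of v] by (intro mult_left_mono) auto
  finally show ?thesis by (simp add: ac_simps)
qed

lemma inner_matrix_vector_diff_le:
  fixes A B :: "real^'a^'b"
  assumes "onorm ((*v) (A - B)) \<le> c"
  shows "\<bar>u \<bullet> (A *v v) - u \<bullet> (B *v v)\<bar> \<le> c * norm u * norm v"
proof -
  have "\<bar>u \<bullet> (A *v v) - u \<bullet> (B *v v)\<bar> = \<bar>u \<bullet> ((A - B) *v v)\<bar>"
    by (metis matrix_vector_mult_diff_rdistrib inner_diff_right)
  also have "\<dots> \<le> onorm ((*v) (A - B)) * norm u * norm v" by (rule inner_matrix_vector_le_onorm)
  also have "\<dots> \<le> c * norm u * norm v" using assms by (intro mult_right_mono) auto
  finally show ?thesis .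
qed

locale minimax_problem =
  fixes f :: "real^'m \<Rightarrow> real^'n \<Rightarrow> real"
    and g1 :: "real^'m \<Rightarrow> real^'n \<Rightarrow> real^'m" and g2 :: "real^'m \<Rightarrow> real^'n \<Rightarrow> real^'n"
    and H11 :: "real^'m \<Rightarrow> real^'n \<Rightarrow> real^'m^'m" and H12 :: "real^'m \<Rightarrow> real^'n \<Rightarrow> real^'n^'m"
    and H21 :: "real^'m \<Rightarrow> real^'n \<Rightarrow> real^'m^'n" and H22 :: "real^'m \<Rightarrow> real^'n \<Rightarrow> real^'n^'n"
    and L1 L2 \<mu> :: real
  assumes standing: "standing_assumption f g1 g2 H11 H12 H21 H22 L1 L2 \<mu>"
begin

lemma L1_nonneg: "0 \<le> L1" and mu_pos: "0 < \<mu>" and L2_nonneg: "0 \<le> L2"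
  using standing by (simp_all add: standing_assumption_def)

lemma f_concave_combination:
  "0 \<le> t \<Longrightarrow> t \<le> 1 \<Longrightarrow>
    t * f x y + (1 - t) * f x y' + \<mu> / 2 * t * (1 - t) * norm (y - y') ^ 2 \<le> f x (t *\<^sub>R y + (1 - t) *\<^sub>R y')"
  using standing by (simp add: standing_assumption_def)

lemma H_lipschitz:
  shows H11_lipschitz: "onorm ((*v) (H11 x y - H11 x' y')) \<le> L2 * norm ((x, y) - (x', y'))"
    and H12_lipschitz: "onorm ((*v) (H12 x y - H12 x' y')) \<le> L2 * norm ((x, y) - (x', y'))"
    and H21_lipschitz: "onorm ((*v) (H21 x y - H21 x' y')) \<le> L2 * norm ((x, y) - (x', y'))"
    and H22_lipschitz: "onorm ((*v) (H22 x y - H22 x' y')) \<le> L2 * norm ((x, y) - (x', y'))"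
  using standing by (simp_all add: standing_assumption_def)

definition F :: "(real^'m) \<times> (real^'n) \<Rightarrow> real"
  where "F p = f (fst p) (snd p)"

definition grad :: "(real^'m) \<times> (real^'n) \<Rightarrow> (real^'m) \<times> (real^'n)"
  where "grad p = (g1 (fst p) (snd p), g2 (fst p) (snd p))"

definition hess :: "(real^'m) \<times> (real^'n) \<Rightarrow> (real^'m) \<times> (real^'n) \<Rightarrow> (real^'m) \<times> (real^'n)"
  where "hess p q = (H11 (fst p) (snd p) *v fst q + H12 (fst p) (snd p) *v snd q,
                     H21 (fst p) (snd p) *v fst q + H22 (fst p) (snd p) *v snd q)"

text \<open>The block Lipschitz bounds on \<open>H11, \<dots>, H22\<close> combine in this norm, and
  \<open>block_norm (s, ystar f (x + s) - ystar f x) \<le> (1 + L1 / \<mu>) * norm s\<close> produces the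
  constant \<open>LPhi\<close>.\<close>

definition block_norm :: "(real^'m) \<times> (real^'n) \<Rightarrow> real"
  where "block_norm q = norm (fst q) + norm (snd q)"

lemma block_norm_nonneg: "0 \<le> block_norm q"
  by (simp add: block_norm_def)

lemma norm_le_block_norm: "norm q \<le> block_norm q"
  unfolding block_norm_def by (metis norm_Pair_le prod.collapse)

lemma block_norm_scaleR: "0 \<le> h \<Longrightarrow> block_norm (h *\<^sub>R q) = h * block_norm q"
  by (simp add: block_norm_def algebra_simps)

lemma partial_derivatives:
  shows f_has_derivative: "((\<lambda>p. f (fst p) (snd p)) has_derivative
      (\<lambda>h. g1 x y \<bullet> fst h + g2 x y \<bullet> snd h)) (at (x, y))"
    and g1_has_derivative: "((\<lambda>p. g1 (fst p) (snd p)) has_derivative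
      (\<lambda>h. H11 x y *v fst h + H12 x y *v snd h)) (at (x, y))"
    and g2_has_derivative: "((\<lambda>p. g2 (fst p) (snd p)) has_derivative
      (\<lambda>h. H21 x y *v fst h + H22 x y *v snd h)) (at (x, y))"
  using standing by (simp_all add: standing_assumption_def)

lemma F_has_derivative: "(F has_derivative (\<lambda>h. grad p \<bullet> h)) (at p)"
  using f_has_derivative[of "fst p" "snd p"] by (simp add: F_def[abs_def] grad_def inner_prod_def)

lemma grad_has_derivative: "(grad has_derivative hess p) (at p)"
  using has_derivative_Pair[OF g1_has_derivative g2_has_derivative, of "fst p" "snd p"]
  by (simp add: grad_def[abs_def] hess_def[abs_def])

lemma hess_scaleR: "hess p (c *\<^sub>R q) = c *\<^sub>R hess p q"
  using grad_has_derivative has_derivative_linear linear_cmul by blast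

lemma grad_lipschitz: "norm (grad p - grad p') \<le> L1 * norm (p - p')"
proof -
  have "\<forall>x y x' y'. norm ((g1 x y, g2 x y) - (g1 x' y', g2 x' y')) \<le> L1 * norm ((x, y) - (x', y'))"
    using standing by (simp add: standing_assumption_def)
  then show ?thesis unfolding grad_def by (metis prod.collapse)
qed

lemma hess_lipschitz: "\<bar>a \<bullet> hess p b - a \<bullet> hess p' b\<bar> \<le> L2 * norm (p - p') * block_norm a * block_norm b"
proof -
  obtain x y x' y' where p: "p = (x, y)" "p' = (x', y')" by (cases p, cases p')
  let ?d = "L2 * norm (p - p')"
  have "\<bar>fst a \<bullet> (H11 x y *v fst b) - fst a \<bullet> (H11 x' y' *v fst b)\<bar> \<le> ?d * norm (fst a) * norm (fst b)"
    "\<bar>fst a \<bullet> (H12 x y *v snd b) - fst a \<bullet> (H12 x' y' *v snd b)\<bar> \<le> ?d * norm (fst a) * norm (snd b)"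
    "\<bar>snd a \<bullet> (H21 x y *v fst b) - snd a \<bullet> (H21 x' y' *v fst b)\<bar> \<le> ?d * norm (snd a) * norm (fst b)"
    "\<bar>snd a \<bullet> (H22 x y *v snd b) - snd a \<bullet> (H22 x' y' *v snd b)\<bar> \<le> ?d * norm (snd a) * norm (snd b)"
    unfolding p by (intro inner_matrix_vector_diff_le H_lipschitz)+
  moreover have "a \<bullet> hess p b - a \<bullet> hess p' b =
      (fst a \<bullet> (H11 x y *v fst b) - fst a \<bullet> (H11 x' y' *v fst b)) +
      (fst a \<bullet> (H12 x y *v snd b) - fst a \<bullet> (H12 x' y' *v snd b)) +
      (snd a \<bullet> (H21 x y *v fst b) - snd a \<bullet> (H21 x' y' *v fst b)) +
      (snd a \<bullet> (H22 x y *v snd b) - snd a \<bullet> (H22 x' y' *v snd b))"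
    by (simp add: hess_def p inner_prod_def inner_add_right)
  moreover have "?d * block_norm a * block_norm b =
      ?d * norm (fst a) * norm (fst b) + ?d * norm (fst a) * norm (snd b)
      + ?d * norm (snd a) * norm (fst b) + ?d * norm (snd a) * norm (snd b)"
    by (simp add: block_norm_def algebra_simps)
  ultimately show ?thesis by linarith
qed

lemma F_line_has_derivative:
  "((\<lambda>\<tau>. F (p + \<tau> *\<^sub>R q)) has_real_derivative (grad (p + t *\<^sub>R q) \<bullet> q)) (at t)"
proof -
  have "((\<lambda>\<tau>. p + \<tau> *\<^sub>R q) has_derivative (\<lambda>\<tau>. \<tau> *\<^sub>R q)) (at t)"
    by (auto intro!: derivative_eq_intros)
  from has_derivative_compose[OF this F_has_derivative] show ?thesis
    unfolding has_field_derivative_def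
    by (rule has_derivative_eq_rhs) (simp add: fun_eq_iff mult.commute)
qed

lemma grad_line_has_derivative:
  "((\<lambda>\<tau>. c \<bullet> grad (p + \<tau> *\<^sub>R q)) has_real_derivative (c \<bullet> hess (p + t *\<^sub>R q) q)) (at t)"
proof -
  have "((\<lambda>\<tau>. p + \<tau> *\<^sub>R q) has_derivative (\<lambda>\<tau>. \<tau> *\<^sub>R q)) (at t)"
    by (auto intro!: derivative_eq_intros)
  from has_derivative_inner_right[OF has_derivative_compose[OF this grad_has_derivative]]
  show ?thesis unfolding has_field_derivative_def
    by (rule has_derivative_eq_rhs) (simp add: fun_eq_iff mult.commute hess_scaleR)
qed

lemma hess_line_lipschitz:
  "0 \<le> t \<Longrightarrow> \<bar>c \<bullet> hess (p + t *\<^sub>R q) q - c \<bullet> hess p q\<bar> \<le> L2 * norm q * block_norm c * block_norm q * t"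
  using hess_lipschitz[of c "p + t *\<^sub>R q" q p] by (simp add: algebra_simps)

lemma grad_taylor:
  "\<bar>c \<bullet> grad (p + q) - c \<bullet> grad p - c \<bullet> hess p q\<bar> \<le> L2 * norm q * block_norm c * block_norm q / 2"
  using taylor_linear_abs[where \<phi> = "\<lambda>\<tau>. c \<bullet> grad (p + \<tau> *\<^sub>R q)"
      and \<phi>' = "\<lambda>\<tau>. c \<bullet> hess (p + \<tau> *\<^sub>R q) q" and K = "L2 * norm q * block_norm c * block_norm q"]
    grad_line_has_derivative hess_line_lipschitz
  by simp

lemma F_taylor2:
  "\<bar>F (p + q) - F p - grad p \<bullet> q - q \<bullet> hess p q / 2\<bar> \<le> L2 * norm q * block_norm q ^ 2 / 6"
  using taylor_quadratic_abs[where \<phi> = "\<lambda>\<tau>. F (p + \<tau> *\<^sub>R q)"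
      and \<phi>' = "\<lambda>\<tau>. q \<bullet> grad (p + \<tau> *\<^sub>R q)" and \<phi>'' = "\<lambda>\<tau>. q \<bullet> hess (p + \<tau> *\<^sub>R q) q"
      and K = "L2 * norm q * block_norm q * block_norm q"]
    F_line_has_derivative[unfolded inner_commute[of _ q]] grad_line_has_derivative hess_line_lipschitz
  by (simp add: inner_commute power2_eq_square mult.assoc)

lemma F_taylor1: "\<bar>F (p + q) - F p - grad p \<bullet> q\<bar> \<le> L1 / 2 * norm q ^ 2"
proof -
  have "\<bar>grad (p + t *\<^sub>R q) \<bullet> q - grad p \<bullet> q\<bar> \<le> L1 * norm q ^ 2 * t" if "0 \<le> t" for t
  proof -
    have "\<bar>grad (p + t *\<^sub>R q) \<bullet> q - grad p \<bullet> q\<bar> \<le> norm (grad (p + t *\<^sub>R q) - grad p) * norm q"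
      by (metis Cauchy_Schwarz_ineq2 inner_diff_left)
    also have "\<dots> \<le> L1 * norm (t *\<^sub>R q) * norm q"
      using grad_lipschitz[of "p + t *\<^sub>R q" p] by (intro mult_right_mono) auto
    finally show ?thesis using that by (simp add: power2_eq_square mult_ac)
  qed
  with taylor_linear_abs[where \<phi> = "\<lambda>\<tau>. F (p + \<tau> *\<^sub>R q)"
      and \<phi>' = "\<lambda>\<tau>. grad (p + \<tau> *\<^sub>R q) \<bullet> q" and K = "L1 * norm q ^ 2"]
  show ?thesis using F_line_has_derivative by simp
qed

subsection \<open>Symmetry of the Hessian\<close>

lemma second_difference_approx:
  "\<bar>F (p + a + b) - F (p + a) - F (p + b) + F p - a \<bullet> hess p b\<bar>
     \<le> L2 * (norm a * block_norm a ^ 2 / 3 + norm b * block_norm a * block_norm b / 2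
              + norm b * block_norm a ^ 2 / 2)"
proof -
  have "p + a + b = (p + b) + a" by (simp add: algebra_simps)
  then have "\<bar>F (p + a + b) - F (p + b) - grad (p + b) \<bullet> a - a \<bullet> hess (p + b) a / 2\<bar>
      \<le> L2 * norm a * block_norm a ^ 2 / 6"
    by (metis F_taylor2)
  moreover have "\<bar>F (p + a) - F p - grad p \<bullet> a - a \<bullet> hess p a / 2\<bar> \<le> L2 * norm a * block_norm a ^ 2 / 6"
    by (rule F_taylor2)
  moreover have "\<bar>grad (p + b) \<bullet> a - grad p \<bullet> a - a \<bullet> hess p b\<bar> \<le> L2 * norm b * block_norm a * block_norm b / 2"
    using grad_taylor[of a p b] by (simp add: inner_commute)
  moreover have "\<bar>a \<bullet> hess (p + b) a - a \<bullet> hess p a\<bar> \<le> L2 * norm b * block_norm a ^ 2"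
    using hess_lipschitz[of a "p + b" a p] by (simp add: power2_eq_square mult.assoc)
  moreover have "L2 * (norm a * block_norm a ^ 2 / 3 + norm b * block_norm a * block_norm b / 2
      + norm b * block_norm a ^ 2 / 2) = 2 * (L2 * norm a * block_norm a ^ 2 / 6)
      + L2 * norm b * block_norm a * block_norm b / 2 + L2 * norm b * block_norm a ^ 2 / 2"
    by (simp add: algebra_simps)
  ultimately show ?thesis by (simp only: abs_le_iff) linarith
qed

text \<open>Schwarz's theorem: the second difference of \<open>F\<close> is symmetric in \<open>a\<close> and \<open>b\<close> and
  approximates both bilinear forms to third order, so scaling \<open>a, b\<close> by \<open>h \<rightarrow> 0\<close> forces
  equality.\<close>

lemma hess_symmetric: "a \<bullet> hess p b = b \<bullet> hess p a"
proof -
  define R where "R a b = L2 * (norm a * block_norm a ^ 2 / 3 + norm b * block_norm a * block_norm b / 2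
      + norm b * block_norm a ^ 2 / 2)" for a b
  have "\<bar>a \<bullet> hess p b - b \<bullet> hess p a\<bar> \<le> 0 + (R a b + R b a) * h" if h: "0 < h" "h \<le> 1" for h
  proof -
    have swap: "p + h *\<^sub>R b + h *\<^sub>R a = p + h *\<^sub>R a + h *\<^sub>R b" by (simp add: algebra_simps)
    have "\<bar>(h *\<^sub>R a) \<bullet> hess p (h *\<^sub>R b) - (h *\<^sub>R b) \<bullet> hess p (h *\<^sub>R a)\<bar>
        \<le> R (h *\<^sub>R a) (h *\<^sub>R b) + R (h *\<^sub>R b) (h *\<^sub>R a)"
      using second_difference_approx[of p "h *\<^sub>R a" "h *\<^sub>R b", folded R_def]
        second_difference_approx[of p "h *\<^sub>R b" "h *\<^sub>R a", folded R_def, unfolded swap]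
      by (auto simp only: abs_le_iff)
    also have "\<dots> = h ^ 2 * (h * (R a b + R b a))"
      using h by (simp add: R_def block_norm_scaleR algebra_simps power2_eq_square)
    finally have "\<bar>(h *\<^sub>R a) \<bullet> hess p (h *\<^sub>R b) - (h *\<^sub>R b) \<bullet> hess p (h *\<^sub>R a)\<bar>
        \<le> h ^ 2 * (h * (R a b + R b a))" .
    moreover have "(h *\<^sub>R a) \<bullet> hess p (h *\<^sub>R b) - (h *\<^sub>R b) \<bullet> hess p (h *\<^sub>R a)
        = h ^ 2 * (a \<bullet> hess p b - b \<bullet> hess p a)"
      by (simp add: hess_scaleR algebra_simps power2_eq_square)
    ultimately have "h ^ 2 * \<bar>a \<bullet> hess p b - b \<bullet> hess p a\<bar> \<le> h ^ 2 * (h * (R a b + R b a))"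
      by (simp add: abs_mult)
    then show ?thesis using h by (simp add: mult.commute)
  qed
  then have "\<bar>a \<bullet> hess p b - b \<bullet> hess p a\<bar> \<le> 0" by (rule le_of_forall_le_add_mult)
  then show ?thesis by simp
qed

lemma H12_H21_transpose: "s \<bullet> (H12 x y *v d) = d \<bullet> (H21 x y *v s)"
  using hess_symmetric[of "(s, 0)" "(x, y)" "(0, d)"] by (simp add: hess_def inner_prod_def)

lemma H22_symmetric: "d \<bullet> (H22 x y *v e) = e \<bullet> (H22 x y *v d)"
  using hess_symmetric[of "(0, d)" "(x, y)" "(0, e)"] by (simp add: hess_def inner_prod_def)

subsection \<open>The maximiser \<open>ystar\<close> and gradient ascent\<close>

lemma f_quadratic_bounds_y:
  shows f_le_quadratic_y: "f x (y + v) \<le> f x y + g2 x y \<bullet> v + L1 / 2 * norm v ^ 2"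
    and f_ge_quadratic_y: "f x y + g2 x y \<bullet> v - L1 / 2 * norm v ^ 2 \<le> f x (y + v)"
proof -
  have "\<bar>f x (y + v) - f x y - g2 x y \<bullet> v\<bar> \<le> L1 / 2 * norm v ^ 2"
    using F_taylor1[of "(x, y)" "(0, v)"] by (simp add: F_def grad_def)
  then show "f x (y + v) \<le> f x y + g2 x y \<bullet> v + L1 / 2 * norm v ^ 2"
    and "f x y + g2 x y \<bullet> v - L1 / 2 * norm v ^ 2 \<le> f x (y + v)"
    unfolding abs_le_iff by linarith+
qed

lemma f_strongly_concave: "f x z \<le> f x y + g2 x y \<bullet> (z - y) - \<mu> / 2 * norm (z - y) ^ 2"
proof -
  define D where "D = norm (z - y) ^ 2"
  define G where "G = g2 x y \<bullet> (z - y)"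
  have "f x z + \<mu> / 2 * D \<le> (f x y + G) + ((L1 + \<mu>) / 2 * D) * t" if t: "0 < t" "t \<le> 1" for t
  proof -
    have "t * f x z + (1 - t) * f x y + \<mu> / 2 * t * (1 - t) * D \<le> f x (t *\<^sub>R z + (1 - t) *\<^sub>R y)"
      using f_concave_combination[of t x z y] t unfolding D_def by simp
    moreover have "t *\<^sub>R z + (1 - t) *\<^sub>R y = y + t *\<^sub>R (z - y)" by (simp add: algebra_simps)
    moreover have "f x (y + t *\<^sub>R (z - y)) \<le> f x y + t * G + L1 / 2 * t ^ 2 * D"
      using f_le_quadratic_y[of x y "t *\<^sub>R (z - y)"] unfolding G_def D_def
      by (simp add: power_mult_distrib)
    ultimately have "t * (f x z - f x y + \<mu> / 2 * (1 - t) * D - G - L1 / 2 * t * D) \<le> 0"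
      by (simp add: algebra_simps power2_eq_square)
    with t have "f x z - f x y + \<mu> / 2 * (1 - t) * D - G - L1 / 2 * t * D \<le> 0"
      by (simp add: mult_le_0_iff)
    then show ?thesis by (simp add: field_simps)
  qed
  then have "f x z + \<mu> / 2 * D \<le> f x y + G" by (rule le_of_forall_le_add_mult)
  then show ?thesis unfolding D_def G_def by simp
qed

lemma g2_strongly_monotone: "(g2 x y - g2 x z) \<bullet> (y - z) \<le> - \<mu> * norm (y - z) ^ 2"
  using f_strongly_concave[of x z y] f_strongly_concave[of x y z]
  by (simp add: norm_minus_commute[of z y] inner_diff_left inner_diff_right)

lemma partial_lipschitz:
  shows g1_lipschitz_y: "norm (g1 x y - g1 x z) \<le> L1 * norm (y - z)"
    and g2_lipschitz_x: "norm (g2 x y - g2 x' y) \<le> L1 * norm (x - x')"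
  using grad_lipschitz[of "(x, y)" "(x, z)"] grad_lipschitz[of "(x, y)" "(x', y)"]
    norm_fst_le[of "g1 x y - g1 x z" "g2 x y - g2 x z"] norm_snd_le[of "g2 x y - g2 x' y" "g1 x y - g1 x' y"]
  by (simp_all add: grad_def)

lemma g2_eq_0_if_max:
  assumes "\<And>y'. f x y' \<le> f x y"
  shows "g2 x y = 0"
proof -
  define w where "w = g2 x y"
  have "norm w ^ 2 \<le> 0 + (L1 / 2 * norm w ^ 2) * t" if t: "0 < t" "t \<le> 1" for t
  proof -
    have e1: "g2 x y \<bullet> (t *\<^sub>R w) = t * norm w ^ 2" by (simp add: w_def power2_norm_eq_inner)
    have e2: "norm (t *\<^sub>R w) ^ 2 = t ^ 2 * norm w ^ 2" by (simp add: power_mult_distrib)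
    have "t * norm w ^ 2 \<le> L1 / 2 * (t ^ 2 * norm w ^ 2)"
      using f_ge_quadratic_y[of x y "t *\<^sub>R w", unfolded e1 e2] assms[of "y + t *\<^sub>R w"] by linarith
    with t show ?thesis by (simp add: power2_eq_square mult_le_cancel_left_pos algebra_simps)
  qed
  then have "norm w ^ 2 \<le> 0" by (rule le_of_forall_le_add_mult)
  then show ?thesis unfolding w_def by simp
qed

lemma f_continuous_y: "continuous_on UNIV (f x)"
proof -
  have "continuous_on UNIV F"
    using F_has_derivative by (intro has_derivative_continuous_on) (auto intro: has_derivative_at_withinI)
  then have "continuous_on UNIV (\<lambda>y. F (x, y))"
    by (rule continuous_on_compose2) (auto intro!: continuous_intros)
  then show ?thesis by (simp add: F_def[abs_def])
qed

lemma ex_max_y: "\<exists>y. \<forall>y'. f x y' \<le> f x y"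
proof -
  define S where "S = {y. f x 0 \<le> f x y}"
  have "S \<subseteq> cball 0 (norm (g2 x 0) / (\<mu> / 2))"
  proof
    fix y assume "y \<in> S"
    then have "\<mu> / 2 * norm y ^ 2 \<le> g2 x 0 \<bullet> y"
      using f_strongly_concave[of x y 0] by (simp add: S_def)
    also have "\<dots> \<le> norm y * norm (g2 x 0)" by (metis norm_cauchy_schwarz mult.commute)
    finally show "y \<in> cball 0 (norm (g2 x 0) / (\<mu> / 2))"
      using le_divide_of_mult_square_le[of "\<mu> / 2" "norm y" "norm (g2 x 0)"] mu_pos by simp
  qed
  moreover have "closed S" unfolding S_def
    by (rule closed_Collect_le) (use f_continuous_y in auto)
  ultimately have "compact S"
    by (meson bounded_cball bounded_subset compact_eq_bounded_closed)
  moreover have "0 \<in> S" by (simp add: S_def)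
  ultimately obtain y where y: "y \<in> S" and max_on_S: "\<And>z. z \<in> S \<Longrightarrow> f x z \<le> f x y"
    using continuous_attains_sup[of S "f x"] continuous_on_subset[OF f_continuous_y] by blast
  have "f x z \<le> f x y" for z
    using max_on_S[of z] y by (cases "z \<in> S") (auto simp: S_def)
  then show ?thesis by blast
qed

lemma max_y_unique:
  assumes "\<forall>y'. f x y' \<le> f x y" "\<forall>y'. f x y' \<le> f x z"
  shows "y = z"
proof -
  have "f x z \<le> f x y + g2 x y \<bullet> (z - y) - \<mu> / 2 * norm (z - y) ^ 2" by (rule f_strongly_concave)
  moreover have "g2 x y = 0" using assms(1) by (blast intro: g2_eq_0_if_max)
  moreover have "f x y \<le> f x z" using assms(2) by blast
  ultimately have "\<mu> * norm (z - y) ^ 2 \<le> 0" by simp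
  then show ?thesis using mu_pos by (simp add: mult_le_0_iff)
qed

lemma f_le_f_ystar: "f x y \<le> f x (ystar f x)"
proof -
  have "\<exists>!y. \<forall>y'. f x y' \<le> f x y" using ex_max_y max_y_unique by blast
  then have "\<forall>y'. f x y' \<le> f x (THE y. \<forall>y'. f x y' \<le> f x y)" by (rule theI')
  then show ?thesis unfolding ystar_def by blast
qed

lemma g2_ystar: "g2 x (ystar f x) = 0"
  using g2_eq_0_if_max f_le_f_ystar by blast

lemma Phi_eq_f_ystar: "Phi f x = f x (ystar f x)"
  unfolding Phi_def using f_le_f_ystar by (intro cSup_eq_maximum) auto

lemma ystar_lipschitz: "norm (ystar f x - ystar f x') \<le> L1 / \<mu> * norm (x - x')"
proof -
  define a b where "a = ystar f x" and "b = ystar f x'"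
  have "\<mu> * norm (a - b) ^ 2 \<le> (g2 x a - g2 x' a) \<bullet> (a - b)"
    using g2_strongly_monotone[of x' a b] g2_ystar[of x] g2_ystar[of x']
    unfolding a_def b_def by (simp add: inner_diff_left)
  also have "\<dots> \<le> norm (a - b) * norm (g2 x a - g2 x' a)" by (metis norm_cauchy_schwarz mult.commute)
  also have "\<dots> \<le> norm (a - b) * (L1 * norm (x - x'))" by (intro mult_left_mono g2_lipschitz_x) simp
  finally have "norm (a - b) \<le> L1 * norm (x - x') / \<mu>"
    by (rule le_divide_of_mult_square_le) (simp_all add: mu_pos L1_nonneg)
  then show ?thesis by (simp add: a_def b_def)
qed

lemma mu_le_L1: "\<mu> \<le> L1"
proof -
  obtain v :: "real^'n" where "v \<noteq> 0" using vector_choose_size[of 1] by (metis norm_zero zero_neq_one)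
  moreover have "\<mu> / 2 * norm v ^ 2 \<le> L1 / 2 * norm v ^ 2"
    using f_strongly_concave[of 0 v 0] f_ge_quadratic_y[of 0 0 v] by simp
  ultimately show ?thesis by simp
qed

lemma ascent_step_contraction:
  "norm (y + (2 / (L1 + \<mu>)) *\<^sub>R g2 x y - ystar f x) \<le> (L1 - \<mu>) / (L1 + \<mu>) * norm (y - ystar f x)"
proof -
  have "norm (y - (2 / (L1 + \<mu>)) *\<^sub>R (- g2 x y) - ystar f x) \<le> (L1 - \<mu>) / (L1 + \<mu>) * norm (y - ystar f x)"
  proof (rule gradient_step_contraction[where h = "\<lambda>z. - f x z" and Dh = "\<lambda>z. - g2 x z"])
    fix y z
    show "- f x y + (- g2 x y) \<bullet> (z - y) + \<mu> / 2 * norm (z - y) ^ 2 \<le> - f x z"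
      using f_strongly_concave[of x z y] by simp
    show "- f x z \<le> - f x y + (- g2 x y) \<bullet> (z - y) + L1 / 2 * norm (z - y) ^ 2"
      using f_ge_quadratic_y[of x y "z - y"] by simp
  qed (use mu_pos mu_le_L1 g2_ystar in auto)
  then show ?thesis by simp
qed

lemma ascent_iterate_contraction:
  "norm (((\<lambda>v. v + (2 / (L1 + \<mu>)) *\<^sub>R g2 x v) ^^ k) y - ystar f x)
     \<le> ((L1 - \<mu>) / (L1 + \<mu>)) ^ k * norm (y - ystar f x)"
proof (induction k)
  case (Suc k)
  let ?\<rho> = "(L1 - \<mu>) / (L1 + \<mu>)" and ?y = "((\<lambda>v. v + (2 / (L1 + \<mu>)) *\<^sub>R g2 x v) ^^ k) y"
  have "0 \<le> ?\<rho>" using mu_pos mu_le_L1 by simp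
  have "norm (((\<lambda>v. v + (2 / (L1 + \<mu>)) *\<^sub>R g2 x v) ^^ Suc k) y - ystar f x)
      \<le> ?\<rho> * norm (?y - ystar f x)"
    using ascent_step_contraction by simp
  also have "\<dots> \<le> ?\<rho> * (?\<rho> ^ k * norm (y - ystar f x))"
    by (rule mult_left_mono[OF Suc.IH \<open>0 \<le> ?\<rho>\<close>])
  finally show ?case by simp
qed simp

subsection \<open>The Schur complement\<close>

lemma hess_le_difference_quotient:
  assumes "0 < h"
  shows "c \<bullet> hess p q \<le> (c \<bullet> grad (p + h *\<^sub>R q) - c \<bullet> grad p) / h
      + L2 * norm q * block_norm c * block_norm q / 2 * h"
proof -
  have "h * (c \<bullet> hess p q) \<le> c \<bullet> grad (p + h *\<^sub>R q) - c \<bullet> grad p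
      + h * (L2 * norm q * block_norm c * block_norm q / 2 * h)"
    using grad_taylor[of c p "h *\<^sub>R q", unfolded abs_le_iff] assms
    by (simp add: hess_scaleR block_norm_scaleR algebra_simps)
  with assms show ?thesis by (simp add: field_simps)
qed

lemma H22_negative_definite: "d \<bullet> (H22 x y *v d) \<le> - \<mu> * norm d ^ 2"
proof -
  have "d \<bullet> (H22 x y *v d) \<le> - \<mu> * norm d ^ 2 + (L2 * norm d ^ 3 / 2) * h" if "0 < h" "h \<le> 1" for h
  proof -
    have "h * (d \<bullet> g2 x (y + h *\<^sub>R d) - d \<bullet> g2 x y) \<le> h * (- \<mu> * norm d ^ 2 * h)"
      using g2_strongly_monotone[of x "y + h *\<^sub>R d" y] \<open>0 < h\<close>
      by (simp add: inner_diff_left inner_commute power_mult_distrib power2_eq_square algebra_simps)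
    then have "d \<bullet> g2 x (y + h *\<^sub>R d) - d \<bullet> g2 x y \<le> - \<mu> * norm d ^ 2 * h"
      using \<open>0 < h\<close> by (rule mult_left_le_imp_le)
    with \<open>0 < h\<close> have "(d \<bullet> g2 x (y + h *\<^sub>R d) - d \<bullet> g2 x y) / h \<le> - \<mu> * norm d ^ 2"
      by (simp add: pos_divide_le_eq)
    with hess_le_difference_quotient[OF \<open>0 < h\<close>, of "(0, d)" "(x, y)" "(0, d)"] show ?thesis
      by (simp add: hess_def grad_def block_norm_def power3_eq_cube power2_eq_square)
  qed
  then show ?thesis by (rule le_of_forall_le_add_mult)
qed

lemma norm_H21_le: "norm (H21 x y *v s) \<le> L1 * norm s"
proof -
  define w where "w = H21 x y *v s"
  have "norm w ^ 2 \<le> norm w * (L1 * norm s) + (L2 * norm s ^ 2 * norm w / 2) * h" if "0 < h" "h \<le> 1" for h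
  proof -
    have "w \<bullet> (g2 (x + h *\<^sub>R s) y - g2 x y) \<le> norm w * norm (g2 (x + h *\<^sub>R s) y - g2 x y)"
      by (rule norm_cauchy_schwarz)
    also have "\<dots> \<le> norm w * (L1 * norm (h *\<^sub>R s))"
      using g2_lipschitz_x[of "x + h *\<^sub>R s" y x] by (intro mult_left_mono) auto
    finally have "w \<bullet> (g2 (x + h *\<^sub>R s) y - g2 x y) \<le> norm w * (L1 * norm (h *\<^sub>R s))" .
    with \<open>0 < h\<close> have "(w \<bullet> g2 (x + h *\<^sub>R s) y - w \<bullet> g2 x y) / h \<le> norm w * (L1 * norm s)"
      by (simp add: inner_diff_right field_simps)
    moreover have "w \<bullet> w \<le> (w \<bullet> g2 (x + h *\<^sub>R s) y - w \<bullet> g2 x y) / h + L2 * norm s * norm w * norm s / 2 * h"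
      using hess_le_difference_quotient[OF \<open>0 < h\<close>, of "(0, w)" "(x, y)" "(s, 0)"]
      by (simp add: hess_def grad_def block_norm_def w_def)
    moreover have "norm w ^ 2 = w \<bullet> w" by (rule power2_norm_eq_inner)
    moreover have "L2 * norm s * norm w * norm s / 2 * h = L2 * norm s ^ 2 * norm w / 2 * h"
      by (simp add: power2_eq_square)
    ultimately show ?thesis by linarith
  qed
  then have "norm w ^ 2 \<le> norm w * (L1 * norm s)" by (rule le_of_forall_le_add_mult)
  then show ?thesis
    using le_divide_of_mult_square_le[of 1 "norm w" "L1 * norm s"] L1_nonneg by (simp add: w_def)
qed

lemma H22_right_inverse: "H22 x y *v (matrix_inv (H22 x y) *v b) = b"
proof -
  have "v = 0" if "H22 x y *v v = 0" for v
    using H22_negative_definite[of v x y] that mu_pos by (simp add: mult_le_0_iff)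
  then have "inj ((*v) (H22 x y))" using vec.inj_iff_eq_0 by blast
  then have "invertible (H22 x y)"
    using matrix_left_invertible_injective invertible_left_inverse by blast
  then have "H22 x y ** matrix_inv (H22 x y) = mat 1 \<and> matrix_inv (H22 x y) ** H22 x y = mat 1"
    unfolding invertible_def matrix_inv_def by (rule someI_ex)
  then show ?thesis by (simp add: matrix_vector_mul_assoc)
qed

text \<open>By the implicit function theorem, \<open>- implicit_dir x (ystar f x) s\<close> is the derivative
  of \<open>ystar f\<close> at \<open>x\<close> in direction \<open>s\<close>.\<close>

definition implicit_dir :: "real^'m \<Rightarrow> real^'n \<Rightarrow> real^'m \<Rightarrow> real^'n"
  where "implicit_dir x y s = matrix_inv (H22 x y) *v (H21 x y *v s)"

lemma H22_implicit_dir: "H22 x y *v implicit_dir x y s = H21 x y *v s"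
  unfolding implicit_dir_def by (rule H22_right_inverse)

lemma Gmat_quadratic_form:
  "s \<bullet> (Gmat H11 H12 H21 H22 x y *v s) = s \<bullet> (H11 x y *v s) - (H21 x y *v s) \<bullet> implicit_dir x y s"
proof -
  have "(H12 x y ** matrix_inv (H22 x y) ** H21 x y) *v s = H12 x y *v implicit_dir x y s"
    unfolding implicit_dir_def by (simp add: matrix_vector_mul_assoc matrix_mul_assoc)
  then show ?thesis
    by (simp add: Gmat_def matrix_vector_mult_diff_rdistrib inner_diff_right H12_H21_transpose inner_commute)
qed

text \<open>The Schur complement is the maximum over \<open>d\<close> of the quadratic form of the Hessian at
  \<open>(s, d)\<close>, attained at \<open>d = - implicit_dir x y s\<close>.\<close>

lemma Hessian_form_le_Schur_complement:
  "2 * ((H21 x y *v s) \<bullet> d) + d \<bullet> (H22 x y *v d) \<le> - ((H21 x y *v s) \<bullet> implicit_dir x y s)"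
proof -
  define e where "e = implicit_dir x y s"
  have "(d + e) \<bullet> (H22 x y *v (d + e)) \<le> - \<mu> * norm (d + e) ^ 2" by (rule H22_negative_definite)
  also have "\<dots> \<le> 0" using mu_pos by simp
  finally have "(d + e) \<bullet> (H22 x y *v (d + e)) \<le> 0" .
  moreover have "(d + e) \<bullet> (H22 x y *v (d + e))
      = d \<bullet> (H22 x y *v d) + 2 * ((H21 x y *v s) \<bullet> d) + (H21 x y *v s) \<bullet> e"
    using H22_symmetric[of e x y d]
    by (simp add: matrix_vector_right_distrib inner_add_left inner_add_right e_def H22_implicit_dir inner_commute)
  ultimately show ?thesis by (simp add: e_def)
qed

lemma norm_implicit_dir_le: "norm (implicit_dir x y s) \<le> L1 / \<mu> * norm s"
proof -
  define e where "e = implicit_dir x y s"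
  have "\<mu> * norm e ^ 2 \<le> - (e \<bullet> (H22 x y *v e))" using H22_negative_definite[of e x y] by simp
  also have "\<dots> = - (e \<bullet> (H21 x y *v s))" by (simp add: e_def H22_implicit_dir)
  also have "\<dots> \<le> norm e * norm (H21 x y *v s)"
    using norm_cauchy_schwarz[of "-e" "H21 x y *v s"] by simp
  also have "\<dots> \<le> norm e * (L1 * norm s)" by (intro mult_left_mono norm_H21_le) simp
  finally have "norm e \<le> L1 * norm s / \<mu>"
    by (rule le_divide_of_mult_square_le) (simp_all add: mu_pos L1_nonneg)
  then show ?thesis by (simp add: e_def)
qed

subsection \<open>A cubic upper bound on \<open>Phi\<close>\<close>

definition \<kappa> :: real where "\<kappa> = L1 / \<mu>"
definition LG :: real where "LG = L2 * (1 + \<kappa>) ^ 2"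
definition LPhi :: real where "LPhi = L2 * (1 + \<kappa>) ^ 3"

lemma kappa_nonneg: "0 \<le> \<kappa>" and LG_nonneg: "0 \<le> LG" and LPhi_nonneg: "0 \<le> LPhi"
  using mu_pos L1_nonneg L2_nonneg by (simp_all add: \<kappa>_def LG_def LPhi_def)

lemma Gmat_quadratic_form_lipschitz_y:
  "s \<bullet> (Gmat H11 H12 H21 H22 x y *v s) \<le> s \<bullet> (Gmat H11 H12 H21 H22 x y' *v s) + LG * norm (y - y') * norm s ^ 2"
proof -
  define e where "e = implicit_dir x y s"
  define \<delta> where "\<delta> = L2 * norm (y - y')"
  have "\<bar>s \<bullet> (H11 x y *v s) - s \<bullet> (H11 x y' *v s)\<bar> \<le> \<delta> * norm s * norm s"
    by (rule inner_matrix_vector_diff_le) (use H11_lipschitz[of x y x y'] in \<open>simp add: \<delta>_def\<close>)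
  moreover have "\<bar>e \<bullet> (H21 x y *v s) - e \<bullet> (H21 x y' *v s)\<bar> \<le> \<delta> * norm e * norm s"
    by (rule inner_matrix_vector_diff_le) (use H21_lipschitz[of x y x y'] in \<open>simp add: \<delta>_def\<close>)
  moreover have "\<bar>e \<bullet> (H22 x y *v e) - e \<bullet> (H22 x y' *v e)\<bar> \<le> \<delta> * norm e * norm e"
    by (rule inner_matrix_vector_diff_le) (use H22_lipschitz[of x y x y'] in \<open>simp add: \<delta>_def\<close>)
  (* evaluate the form at y' on the maximiser -e belonging to y *)
  moreover have "- 2 * (e \<bullet> (H21 x y' *v s)) + e \<bullet> (H22 x y' *v e) \<le> - ((H21 x y' *v s) \<bullet> implicit_dir x y' s)"
    using Hessian_form_le_Schur_complement[of x y' s "- e"] by (simp add: inner_commute vec.neg)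
  moreover have "(H21 x y *v s) \<bullet> e = e \<bullet> (H22 x y *v e)"
    by (simp add: e_def H22_implicit_dir inner_commute)
  ultimately have "s \<bullet> (Gmat H11 H12 H21 H22 x y *v s) - s \<bullet> (Gmat H11 H12 H21 H22 x y' *v s)
      \<le> \<delta> * norm s * norm s + 2 * (\<delta> * norm e * norm s) + \<delta> * norm e * norm e"
    unfolding Gmat_quadratic_form e_def[symmetric] by (simp add: abs_le_iff inner_commute)
  also have "\<dots> = \<delta> * (norm s + norm e) ^ 2" by (simp add: power2_eq_square algebra_simps)
  also have "\<dots> \<le> \<delta> * ((1 + \<kappa>) * norm s) ^ 2"
    using norm_implicit_dir_le[of x y s] L2_nonneg
    by (intro mult_left_mono power_mono) (auto simp: \<delta>_def e_def \<kappa>_def algebra_simps)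
  finally show ?thesis by (simp add: \<delta>_def LG_def power_mult_distrib mult_ac)
qed

lemma Phi_cubic_upper_bound:
  "Phi f (x + s) \<le> Phi f x + g1 x (ystar f x) \<bullet> s
     + 1 / 2 * (s \<bullet> (Gmat H11 H12 H21 H22 x (ystar f x) *v s)) + LPhi / 6 * norm s ^ 3"
proof -
  define y where "y = ystar f x"
  define q where "q = (s, ystar f (x + s) - y)"
  have "block_norm q \<le> (1 + \<kappa>) * norm s"
    using ystar_lipschitz[of "x + s" x] by (simp add: block_norm_def q_def y_def \<kappa>_def algebra_simps)
  then have "norm q * block_norm q ^ 2 \<le> ((1 + \<kappa>) * norm s) ^ 3"
  proof -
    have "norm q * block_norm q ^ 2 \<le> block_norm q * block_norm q ^ 2"
      by (intro mult_right_mono norm_le_block_norm) simp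
    also have "\<dots> = block_norm q ^ 3" by (simp add: power3_eq_cube power2_eq_square)
    also have "\<dots> \<le> ((1 + \<kappa>) * norm s) ^ 3"
      using \<open>block_norm q \<le> (1 + \<kappa>) * norm s\<close> block_norm_nonneg by (rule power_mono)
    finally show ?thesis .
  qed
  then have "L2 * norm q * block_norm q ^ 2 \<le> L2 * ((1 + \<kappa>) * norm s) ^ 3"
    using L2_nonneg by (simp add: mult_left_mono mult.assoc)
  moreover have "q \<bullet> hess (x, y) q \<le> s \<bullet> (Gmat H11 H12 H21 H22 x y *v s)"
    using Hessian_form_le_Schur_complement[of x y s "snd q"]
    by (simp add: hess_def q_def inner_prod_def inner_add_right H12_H21_transpose inner_commute
        Gmat_quadratic_form)
  moreover have "Phi f (x + s) = F ((x, y) + q)" and "Phi f x = F (x, y)"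
    by (simp_all add: Phi_eq_f_ystar F_def q_def y_def)
  moreover have "grad (x, y) \<bullet> q = g1 x y \<bullet> s"
    by (simp add: grad_def q_def inner_prod_def y_def g2_ystar)
  moreover have "LPhi / 6 * norm s ^ 3 = L2 * ((1 + \<kappa>) * norm s) ^ 3 / 6"
    by (simp add: LPhi_def power_mult_distrib)
  ultimately show ?thesis
    using F_taylor2[of "(x, y)" q, unfolded abs_le_iff] unfolding y_def[symmetric] by linarith
qed

end

section \<open>Cubic-GDA\<close>

lemma mixed_cubes_le_sum_cubes:
  fixes \<epsilon> \<sigma> \<sigma>' :: real
  assumes "0 \<le> \<epsilon>" "0 \<le> \<sigma>" "0 \<le> \<sigma>'" "\<epsilon> \<le> max \<sigma> \<sigma>'"
  shows "\<epsilon> ^ 2 * \<sigma> \<le> \<sigma> ^ 3 + \<sigma>' ^ 3" and "\<epsilon> * \<sigma> ^ 2 \<le> \<sigma> ^ 3 + \<sigma>' ^ 3"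
proof -
  define m where "m = max \<sigma> \<sigma>'"
  have "m ^ 3 \<le> \<sigma> ^ 3 + \<sigma>' ^ 3" using assms by (simp add: m_def max_def)
  moreover have "\<epsilon> ^ 2 * \<sigma> \<le> m ^ 2 * m" and "\<epsilon> * \<sigma> ^ 2 \<le> m * m ^ 2"
    using assms by (auto simp: m_def intro!: mult_mono power_mono)
  ultimately show "\<epsilon> ^ 2 * \<sigma> \<le> \<sigma> ^ 3 + \<sigma>' ^ 3" and "\<epsilon> * \<sigma> ^ 2 \<le> \<sigma> ^ 3 + \<sigma>' ^ 3"
    by (simp_all add: power3_eq_cube power2_eq_square)
qed

lemma max_norm_gt_before_Tprime:
  assumes "enat (Suc t) < Tprime \<epsilon> s"
  shows "\<epsilon> < max (norm (s t)) (norm (s (Suc t)))"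
proof (rule ccontr)
  let ?P = "\<lambda>t. t \<ge> 1 \<and> max (norm (s (t - 1))) (norm (s t)) \<le> \<epsilon>"
  assume "\<not> \<epsilon> < max (norm (s t)) (norm (s (Suc t)))"
  then have "?P (Suc t)" by (simp add: not_less)
  then have "Tprime \<epsilon> s = enat (LEAST t. ?P t)" and "(LEAST t. ?P t) \<le> Suc t"
    unfolding Tprime_def by (auto intro: Least_le exI[of _ "Suc t"])
  with assms show False by simp
qed

locale cubic_gda_run = minimax_problem f g1 g2 H11 H12 H21 H22 L1 L2 \<mu>
  for f :: "real^'m \<Rightarrow> real^'n \<Rightarrow> real" and g1 g2 H11 H12 H21 H22 and L1 L2 \<mu> :: real +
  fixes \<alpha> \<beta> \<epsilon> \<eta> :: real
    and x s :: "nat \<Rightarrow> real^'m" and y :: "nat \<Rightarrow> real^'n" and N :: "nat \<Rightarrow> nat"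
  assumes alpha_pos: "0 < \<alpha>" and beta_pos: "0 < \<beta>"
    and eps_pos: "0 < \<epsilon>" and eps_le: "\<epsilon> * (\<beta> * LG) \<le> \<alpha> * L1"
    and eta_pos: "0 < \<eta>" and eta_le: "\<eta> \<le> 1 / (9 * LPhi + 18 * \<alpha> + 28 * \<beta>)"
    and y_step: "y (Suc t) = ((\<lambda>v. v + (2 / (L1 + \<mu>)) *\<^sub>R g2 (x t) v) ^^ N t) (y t)"
    and s_step: "cubic_model (g1 (x t) (y (Suc t))) (Gmat H11 H12 H21 H22 (x t) (y (Suc t))) \<eta> (s (Suc t))
                  \<le> cubic_model (g1 (x t) (y (Suc t))) (Gmat H11 H12 H21 H22 (x t) (y (Suc t))) \<eta> u"
    and x_step: "x (Suc t) = x t + s (Suc t)"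
    and N_0: "L1 * norm (y 0 - ystar f (x 0)) / (2 * \<beta> * \<epsilon>\<^sup>2) > 0 \<longrightarrow>
               \<kappa> * ln (L1 * norm (y 0 - ystar f (x 0)) / (2 * \<beta> * \<epsilon>\<^sup>2)) \<le> real (N 0)"
    and N_Suc: "2 * L1 * \<alpha> * norm (s t) + L1 * (\<alpha> + LG * \<kappa>) * norm (s (Suc t)) > 0 \<longrightarrow>
               LG > 0 \<and>
               \<kappa> * ln ((2 * L1 * \<alpha> * norm (s t) + L1 * (\<alpha> + LG * \<kappa>) * norm (s (Suc t)))
                         / (LG * \<beta> * \<epsilon>\<^sup>2)) \<le> real (N (Suc t))"
begin

lemma L1_pos: "0 < L1"
  using mu_pos mu_le_L1 by linarith

definition tracking_error :: "nat \<Rightarrow> real"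
  where "tracking_error t = norm (y (Suc t) - ystar f (x t))"

lemma tracking_error_le_if_enough_iterations:
  assumes "0 < A" "\<kappa> * ln A \<le> real (N t)" and "L1 * norm (y t - ystar f (x t)) \<le> A * c"
  shows "L1 * tracking_error t \<le> c"
proof -
  define \<rho> where "\<rho> = (L1 - \<mu>) / (L1 + \<mu>)"
  have "0 \<le> \<rho>" using mu_pos mu_le_L1 by (simp add: \<rho>_def)
  have "0 \<le> A * c" using assms(3) L1_nonneg by (meson mult_nonneg_nonneg norm_ge_zero order_trans)
  with \<open>0 < A\<close> have "0 \<le> c" by (simp add: zero_le_mult_iff)
  have "\<rho> ^ N t * A \<le> 1"
    using contraction_factor_power_bound[OF mu_pos mu_le_L1 \<open>0 < A\<close>] assms(2) by (simp add: \<rho>_def \<kappa>_def)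
  have "L1 * tracking_error t \<le> L1 * (\<rho> ^ N t * norm (y t - ystar f (x t)))"
    using ascent_iterate_contraction[where x = "x t" and k = "N t" and y = "y t"] L1_pos
    by (intro mult_left_mono) (simp_all add: tracking_error_def y_step \<rho>_def)
  also have "\<dots> = \<rho> ^ N t * (L1 * norm (y t - ystar f (x t)))" by (simp add: mult_ac)
  also have "\<dots> \<le> \<rho> ^ N t * (A * c)"
    using assms(3) \<open>0 \<le> \<rho>\<close> by (intro mult_left_mono) auto
  also have "\<dots> \<le> c"
    using mult_right_mono[OF \<open>\<rho> ^ N t * A \<le> 1\<close> \<open>0 \<le> c\<close>] by (simp add: mult.assoc)
  finally show ?thesis .
qed

lemma tracking_error_0: "L1 * tracking_error 0 \<le> 2 * \<beta> * \<epsilon> ^ 2"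
proof -
  define A where "A = L1 * norm (y 0 - ystar f (x 0)) / (2 * \<beta> * \<epsilon> ^ 2)"
  have d: "L1 * norm (y 0 - ystar f (x 0)) = A * (2 * \<beta> * \<epsilon> ^ 2)"
    using beta_pos eps_pos by (simp add: A_def)
  show ?thesis
  proof (cases "0 < A")
    case True
    have "\<kappa> * ln A \<le> real (N 0)" using N_0 True by (simp only: A_def)
    from tracking_error_le_if_enough_iterations[OF True this] d show ?thesis by simp
  next
    case False
    then have "A * (2 * \<beta> * \<epsilon> ^ 2) \<le> 1 * (2 * \<beta> * \<epsilon> ^ 2)"
      using beta_pos by (intro mult_right_mono) auto
    with tracking_error_le_if_enough_iterations[of 1 0] d show ?thesis by simp
  qed
qed

lemma restart_error_le:
  "norm (y (Suc t) - ystar f (x (Suc t))) \<le> tracking_error t + \<kappa> * norm (s (Suc t))"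
  using norm_triangle_ineq[of "y (Suc t) - ystar f (x t)" "ystar f (x t) - ystar f (x (Suc t))"]
    ystar_lipschitz[of "x t" "x (Suc t)"]
  by (simp add: tracking_error_def x_step \<kappa>_def)

definition iteration_budget :: "nat \<Rightarrow> real"
  where "iteration_budget t = 2 * L1 * \<alpha> * norm (s t) + L1 * (\<alpha> + LG * \<kappa>) * norm (s (Suc t))"

text \<open>The tracking error re-enters the next inner loop enlarged by the drift of \<open>ystar f\<close>;
  the budget in the prescribed \<open>N (Suc t)\<close> accounts for both.\<close>

lemma restart_error_le_budget:
  assumes IH: "L1 * tracking_error t \<le> 2 * \<beta> * \<epsilon> ^ 2"
    and large_step: "\<epsilon> < max (norm (s t)) (norm (s (Suc t)))"
  shows "0 < iteration_budget t"
    and "LG * (L1 * norm (y (Suc t) - ystar f (x (Suc t)))) \<le> 2 * iteration_budget t"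
proof -
  define \<sigma>\<^sub>0 \<sigma>\<^sub>1 where "\<sigma>\<^sub>0 = norm (s t)" and "\<sigma>\<^sub>1 = norm (s (Suc t))"
  have "0 \<le> \<sigma>\<^sub>0" "0 \<le> \<sigma>\<^sub>1" by (simp_all add: \<sigma>\<^sub>0_def \<sigma>\<^sub>1_def)
  have "\<epsilon> \<le> \<sigma>\<^sub>0 + \<sigma>\<^sub>1"
    using large_step \<open>0 \<le> \<sigma>\<^sub>0\<close> \<open>0 \<le> \<sigma>\<^sub>1\<close> unfolding \<sigma>\<^sub>0_def[symmetric] \<sigma>\<^sub>1_def[symmetric]
    by (cases "\<sigma>\<^sub>0 \<le> \<sigma>\<^sub>1") (simp_all add: max_def)
  then have "\<alpha> * L1 * \<epsilon> \<le> \<alpha> * L1 * (\<sigma>\<^sub>0 + \<sigma>\<^sub>1)"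
    using alpha_pos L1_pos by (intro mult_left_mono) auto
  moreover have "0 < \<alpha> * L1 * \<epsilon>" using alpha_pos L1_pos eps_pos by simp
  moreover have "0 \<le> L1 * (LG * \<kappa>) * \<sigma>\<^sub>1" "0 \<le> \<alpha> * L1 * \<sigma>\<^sub>0"
    using L1_pos LG_nonneg kappa_nonneg alpha_pos \<open>0 \<le> \<sigma>\<^sub>0\<close> \<open>0 \<le> \<sigma>\<^sub>1\<close> by simp_all
  moreover have "iteration_budget t = 2 * (\<alpha> * L1 * \<sigma>\<^sub>0) + \<alpha> * L1 * \<sigma>\<^sub>1 + L1 * (LG * \<kappa>) * \<sigma>\<^sub>1"
    by (simp add: iteration_budget_def \<sigma>\<^sub>0_def \<sigma>\<^sub>1_def algebra_simps)
  ultimately have "0 < iteration_budget t"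
    and budget: "2 * (\<alpha> * L1 * \<epsilon>) + L1 * (LG * \<kappa>) * \<sigma>\<^sub>1 \<le> 2 * iteration_budget t"
    by (simp_all add: algebra_simps)
  then show "0 < iteration_budget t" by blast
  have "LG * (L1 * tracking_error t) \<le> LG * (2 * \<beta> * \<epsilon> ^ 2)"
    using IH LG_nonneg by (rule mult_left_mono)
  also have "\<dots> = 2 * \<epsilon> * (\<epsilon> * (\<beta> * LG))" by (simp add: power2_eq_square algebra_simps)
  also have "\<dots> \<le> 2 * \<epsilon> * (\<alpha> * L1)" using eps_le eps_pos by (intro mult_left_mono) auto
  finally have "LG * (L1 * tracking_error t) \<le> 2 * (\<alpha> * L1 * \<epsilon>)" by (simp add: algebra_simps)
  have "LG * (L1 * norm (y (Suc t) - ystar f (x (Suc t)))) \<le> LG * (L1 * (tracking_error t + \<kappa> * \<sigma>\<^sub>1))"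
    using restart_error_le[of t] LG_nonneg L1_pos by (intro mult_left_mono) (auto simp: \<sigma>\<^sub>1_def)
  also have "\<dots> = LG * (L1 * tracking_error t) + L1 * (LG * \<kappa>) * \<sigma>\<^sub>1"
    by (simp add: algebra_simps)
  also have "\<dots> \<le> 2 * iteration_budget t"
    using \<open>LG * (L1 * tracking_error t) \<le> 2 * (\<alpha> * L1 * \<epsilon>)\<close> budget by linarith
  finally show "LG * (L1 * norm (y (Suc t) - ystar f (x (Suc t)))) \<le> 2 * iteration_budget t" .
qed

lemma tracking_error_Suc:
  assumes "L1 * tracking_error t \<le> 2 * \<beta> * \<epsilon> ^ 2"
    and "\<epsilon> < max (norm (s t)) (norm (s (Suc t)))"
  shows "L1 * tracking_error (Suc t) \<le> 2 * \<beta> * \<epsilon> ^ 2"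
proof -
  define A where "A = iteration_budget t / (LG * \<beta> * \<epsilon> ^ 2)"
  note budget = restart_error_le_budget[OF assms]
  with N_Suc[of t] have "0 < LG" and "\<kappa> * ln A \<le> real (N (Suc t))"
    by (simp_all add: A_def iteration_budget_def)
  moreover have "0 < A" using budget(1) \<open>0 < LG\<close> beta_pos eps_pos by (simp add: A_def)
  moreover have "L1 * norm (y (Suc t) - ystar f (x (Suc t))) \<le> A * (2 * \<beta> * \<epsilon> ^ 2)"
  proof -
    have "2 * iteration_budget t / LG = A * (2 * \<beta> * \<epsilon> ^ 2)"
      using beta_pos eps_pos by (simp add: A_def field_simps)
    with budget(2) \<open>0 < LG\<close> show ?thesis by (simp add: field_simps)
  qed
  ultimately show ?thesis by (intro tracking_error_le_if_enough_iterations)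
qed

lemma tracking_error_bound:
  "enat (Suc t) < Tprime \<epsilon> s \<Longrightarrow> L1 * tracking_error t \<le> 2 * \<beta> * \<epsilon> ^ 2"
proof (induction t)
  case 0
  show ?case by (rule tracking_error_0)
next
  case (Suc t)
  then have "enat (Suc t) < Tprime \<epsilon> s" by (metis enat_ord_simps(2) lessI order.strict_trans)
  with Suc.IH show ?case
    using max_norm_gt_before_Tprime by (intro tracking_error_Suc)
qed

lemma Phi_step_le:
  "Phi f (x (Suc t)) - Phi f (x t) \<le> (LPhi / 6 - 1 / (4 * \<eta>)) * norm (s (Suc t)) ^ 3
     + L1 * tracking_error t * norm (s (Suc t)) + LG * tracking_error t * norm (s (Suc t)) ^ 2 / 2"
proof -
  let ?G = "Gmat H11 H12 H21 H22 (x t)" and ?s = "s (Suc t)"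
  have "Phi f (x (Suc t)) \<le> Phi f (x t) + g1 (x t) (ystar f (x t)) \<bullet> ?s
      + 1 / 2 * (?s \<bullet> (?G (ystar f (x t)) *v ?s)) + LPhi / 6 * norm ?s ^ 3"
    unfolding x_step by (rule Phi_cubic_upper_bound)
  moreover have "g1 (x t) (ystar f (x t)) \<bullet> ?s \<le> g1 (x t) (y (Suc t)) \<bullet> ?s + L1 * tracking_error t * norm ?s"
  proof -
    have "(g1 (x t) (ystar f (x t)) - g1 (x t) (y (Suc t))) \<bullet> ?s
        \<le> norm (g1 (x t) (ystar f (x t)) - g1 (x t) (y (Suc t))) * norm ?s"
      by (rule norm_cauchy_schwarz)
    also have "\<dots> \<le> L1 * tracking_error t * norm ?s"
      using g1_lipschitz_y[of "x t" "ystar f (x t)" "y (Suc t)"]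
      by (intro mult_right_mono) (simp_all add: tracking_error_def norm_minus_commute)
    finally show ?thesis by (simp add: inner_diff_left)
  qed
  moreover have "?s \<bullet> (?G (ystar f (x t)) *v ?s) \<le> ?s \<bullet> (?G (y (Suc t)) *v ?s) + LG * tracking_error t * norm ?s ^ 2"
    using Gmat_quadratic_form_lipschitz_y[of ?s "x t" "ystar f (x t)" "y (Suc t)"]
    by (simp add: tracking_error_def norm_minus_commute)
  moreover have "g1 (x t) (y (Suc t)) \<bullet> ?s + 1 / 2 * (?s \<bullet> (?G (y (Suc t)) *v ?s)) \<le> - 1 / (4 * \<eta>) * norm ?s ^ 3"
    using eta_pos s_step by (rule cubic_model_minimizer_bound)
  ultimately show ?thesis by (simp add: algebra_simps)
qed

lemma LG_tracking_error_le:
  assumes "enat (Suc t) < Tprime \<epsilon> s"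
  shows "LG * tracking_error t \<le> 2 * \<alpha> * \<epsilon>"
proof -
  have "L1 * (LG * tracking_error t) \<le> LG * (2 * \<beta> * \<epsilon> ^ 2)"
    using mult_left_mono[OF tracking_error_bound[OF assms] LG_nonneg] by (simp add: mult.left_commute)
  also have "\<dots> = 2 * \<epsilon> * (\<epsilon> * (\<beta> * LG))" by (simp add: power2_eq_square algebra_simps)
  also have "\<dots> \<le> L1 * (2 * \<alpha> * \<epsilon>)" using eps_le eps_pos by (simp add: mult_left_mono algebra_simps)
  finally show ?thesis using L1_pos by simp
qed

lemma tracking_error_terms_le:
  assumes "enat (Suc t) < Tprime \<epsilon> s"
  shows "L1 * tracking_error t * norm (s (Suc t)) + LG * tracking_error t * norm (s (Suc t)) ^ 2 / 2
      \<le> (2 * \<beta> + \<alpha>) * (norm (s (Suc t)) ^ 3 + norm (s t) ^ 3)"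
proof -
  define \<sigma>\<^sub>0 \<sigma>\<^sub>1 \<delta> where "\<sigma>\<^sub>0 = norm (s t)" and "\<sigma>\<^sub>1 = norm (s (Suc t))" and "\<delta> = tracking_error t"
  have \<sigma>: "0 \<le> \<epsilon>" "0 \<le> \<sigma>\<^sub>1" "0 \<le> \<sigma>\<^sub>0" "\<epsilon> \<le> max \<sigma>\<^sub>1 \<sigma>\<^sub>0"
    using eps_pos max_norm_gt_before_Tprime[OF assms] by (auto simp: \<sigma>\<^sub>0_def \<sigma>\<^sub>1_def)
  have "L1 * \<delta> * \<sigma>\<^sub>1 \<le> 2 * \<beta> * \<epsilon> ^ 2 * \<sigma>\<^sub>1"
    using tracking_error_bound[OF assms] \<open>0 \<le> \<sigma>\<^sub>1\<close> unfolding \<delta>_def by (rule mult_right_mono)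
  also have "\<dots> \<le> 2 * \<beta> * (\<sigma>\<^sub>1 ^ 3 + \<sigma>\<^sub>0 ^ 3)"
    using mixed_cubes_le_sum_cubes(1)[OF \<sigma>] beta_pos by (simp add: mult.assoc)
  finally have "L1 * \<delta> * \<sigma>\<^sub>1 \<le> 2 * \<beta> * (\<sigma>\<^sub>1 ^ 3 + \<sigma>\<^sub>0 ^ 3)" .
  moreover have "LG * \<delta> * \<sigma>\<^sub>1 ^ 2 / 2 \<le> \<alpha> * (\<sigma>\<^sub>1 ^ 3 + \<sigma>\<^sub>0 ^ 3)"
  proof -
    have "LG * \<delta> * \<sigma>\<^sub>1 ^ 2 / 2 \<le> \<alpha> * (\<epsilon> * \<sigma>\<^sub>1 ^ 2)"
      using mult_right_mono[OF LG_tracking_error_le[OF assms], of "\<sigma>\<^sub>1 ^ 2"] by (simp add: \<delta>_def)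
    also have "\<dots> \<le> \<alpha> * (\<sigma>\<^sub>1 ^ 3 + \<sigma>\<^sub>0 ^ 3)"
      using mixed_cubes_le_sum_cubes(2)[OF \<sigma>] alpha_pos by simp
    finally show ?thesis .
  qed
  ultimately show ?thesis unfolding \<sigma>\<^sub>0_def \<sigma>\<^sub>1_def \<delta>_def by (simp add: algebra_simps)
qed

lemma potential_descent:
  assumes "enat (Suc t) < Tprime \<epsilon> s"
  shows "(Phi f (x (Suc t)) + (LPhi + 2 * \<alpha> + 3 * \<beta>) * norm (s (Suc t)) ^ 3)
         - (Phi f (x t) + (LPhi + 2 * \<alpha> + 3 * \<beta>) * norm (s t) ^ 3)
         \<le> - (LPhi + \<alpha> + \<beta>) * (norm (s (Suc t)) ^ 3 + norm (s t) ^ 3)"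
proof -
  define P\<^sub>0 P\<^sub>1 where "P\<^sub>0 = norm (s t) ^ 3" and "P\<^sub>1 = norm (s (Suc t)) ^ 3"
  have "0 \<le> P\<^sub>1" by (simp add: P\<^sub>1_def)
  have "(9 * LPhi + 18 * \<alpha> + 28 * \<beta>) / 4 \<le> 1 / (4 * \<eta>)"
  proof -
    have "0 < 9 * LPhi + 18 * \<alpha> + 28 * \<beta>" using LPhi_nonneg alpha_pos beta_pos by simp
    with eta_le eta_pos show ?thesis by (simp add: field_simps)
  qed
  from mult_right_mono[OF this \<open>0 \<le> P\<^sub>1\<close>]
  have "9 / 4 * (LPhi * P\<^sub>1) + 9 / 2 * (\<alpha> * P\<^sub>1) + 7 * (\<beta> * P\<^sub>1) \<le> 1 / (4 * \<eta>) * P\<^sub>1"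
    by (simp add: algebra_simps)
  moreover have "Phi f (x (Suc t)) - Phi f (x t) \<le> LPhi * P\<^sub>1 / 6 - 1 / (4 * \<eta>) * P\<^sub>1
      + 2 * (\<beta> * P\<^sub>1) + 2 * (\<beta> * P\<^sub>0) + \<alpha> * P\<^sub>1 + \<alpha> * P\<^sub>0"
    using Phi_step_le[of t] tracking_error_terms_le[OF assms]
    by (simp add: P\<^sub>0_def P\<^sub>1_def algebra_simps)
  moreover have "0 \<le> LPhi * P\<^sub>1" "0 \<le> \<alpha> * P\<^sub>1" "0 \<le> \<beta> * P\<^sub>1"
    using LPhi_nonneg alpha_pos beta_pos \<open>0 \<le> P\<^sub>1\<close> by simp_all
  ultimately show ?thesis unfolding P\<^sub>0_def[symmetric] P\<^sub>1_def[symmetric] by (simp add: algebra_simps)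
qed

end

theorem proposition3:
  fixes f :: "real^'m \<Rightarrow> real^'n \<Rightarrow> real"
    and g1 :: "real^'m \<Rightarrow> real^'n \<Rightarrow> real^'m" and g2 :: "real^'m \<Rightarrow> real^'n \<Rightarrow> real^'n"
    and H11 :: "real^'m \<Rightarrow> real^'n \<Rightarrow> real^'m^'m" and H12 :: "real^'m \<Rightarrow> real^'n \<Rightarrow> real^'n^'m"
    and H21 :: "real^'m \<Rightarrow> real^'n \<Rightarrow> real^'m^'n" and H22 :: "real^'m \<Rightarrow> real^'n \<Rightarrow> real^'n^'n"
    and L1 L2 \<mu> \<alpha> \<beta> \<epsilon>' \<eta>x \<eta>y :: real
    and x s :: "nat \<Rightarrow> real^'m" and y :: "nat \<Rightarrow> real^'n" and N :: "nat \<Rightarrow> nat"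
  defines "\<kappa> \<equiv> L1 / \<mu>"
    and "LG \<equiv> L2 * (1 + L1 / \<mu>)\<^sup>2"
    and "LPhi \<equiv> L2 * (1 + L1 / \<mu>)^3"
  assumes SA: "standing_assumption f g1 g2 H11 H12 H21 H22 L1 L2 \<mu>"
    and \<alpha>: "0 < \<alpha>" and \<beta>: "0 < \<beta>"
    and \<epsilon>': "0 < \<epsilon>'" "\<epsilon>' * (\<beta> * LG) \<le> \<alpha> * L1"
    and \<eta>x: "0 < \<eta>x" "\<eta>x \<le> 1 / (9 * LPhi + 18 * \<alpha> + 28 * \<beta>)"
    and \<eta>y: "\<eta>y = 2 / (L1 + \<mu>)"
    and s0: "norm (s 0) = \<epsilon>'"
    and ystep: "\<And>t. y (Suc t) = ((\<lambda>v. v + \<eta>y *\<^sub>R g2 (x t) v) ^^ N t) (y t)"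
    and sstep: "\<And>t u. cubic_model (g1 (x t) (y (Suc t))) (Gmat H11 H12 H21 H22 (x t) (y (Suc t))) \<eta>x (s (Suc t))
                  \<le> cubic_model (g1 (x t) (y (Suc t))) (Gmat H11 H12 H21 H22 (x t) (y (Suc t))) \<eta>x u"
    and xstep: "\<And>t. x (Suc t) = x t + s (Suc t)"
    and N0: "L1 * norm (y 0 - ystar f (x 0)) / (2 * \<beta> * \<epsilon>'\<^sup>2) > 0 \<longrightarrow>
               \<kappa> * ln (L1 * norm (y 0 - ystar f (x 0)) / (2 * \<beta> * \<epsilon>'\<^sup>2)) \<le> real (N 0)"
    and Nt: "\<And>t. t \<ge> 1 \<Longrightarrow>
               2 * L1 * \<alpha> * norm (s (t - 1)) + L1 * (\<alpha> + LG * \<kappa>) * norm (s t) > 0 \<longrightarrow>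
               LG > 0 \<and>
               \<kappa> * ln ((2 * L1 * \<alpha> * norm (s (t - 1)) + L1 * (\<alpha> + LG * \<kappa>) * norm (s t))
                         / (LG * \<beta> * \<epsilon>'\<^sup>2)) \<le> real (N t)"
  shows "\<forall>t. enat t + 2 \<le> Tprime \<epsilon>' s \<longrightarrow>
           (Phi f (x (Suc t)) + (LPhi + 2 * \<alpha> + 3 * \<beta>) * norm (s (Suc t)) ^ 3)
         - (Phi f (x t) + (LPhi + 2 * \<alpha> + 3 * \<beta>) * norm (s t) ^ 3)
         \<le> - (LPhi + \<alpha> + \<beta>) * (norm (s (Suc t)) ^ 3 + norm (s t) ^ 3)"
proof -
  interpret M: minimax_problem f g1 g2 H11 H12 H21 H22 L1 L2 \<mu>
    by (rule minimax_problem.intro) (rule SA)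
  have defs: "\<kappa> = M.\<kappa>" "LG = M.LG" "LPhi = M.LPhi"
    by (simp_all add: \<kappa>_def LG_def LPhi_def M.\<kappa>_def M.LG_def M.LPhi_def)
  have N_Suc: "2 * L1 * \<alpha> * norm (s t) + L1 * (\<alpha> + LG * \<kappa>) * norm (s (Suc t)) > 0 \<longrightarrow>
      LG > 0 \<and> \<kappa> * ln ((2 * L1 * \<alpha> * norm (s t) + L1 * (\<alpha> + LG * \<kappa>) * norm (s (Suc t)))
        / (LG * \<beta> * \<epsilon>'\<^sup>2)) \<le> real (N (Suc t))" for t
    using Nt[of "Suc t"] by simp
  (* s0, the convention for the norm of s 0, is not needed: before T' the descent only uses
     that one of two consecutive steps is longer than \<epsilon>'. *)
  interpret run: cubic_gda_run f g1 g2 H11 H12 H21 H22 L1 L2 \<mu> \<alpha> \<beta> \<epsilon>' \<eta>x x s y N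
    by unfold_locales
      (unfold defs[symmetric], use \<alpha> \<beta> \<epsilon>' \<eta>x sstep xstep N0 N_Suc ystep \<eta>y in simp_all)
  have "enat (Suc t) < Tprime \<epsilon>' s" if "enat t + 2 \<le> Tprime \<epsilon>' s" for t
    using that
    by (metis add_2_eq_Suc' enat_ord_simps(2) lessI numeral_eq_enat order.strict_trans2 plus_enat_simps(1))
  then show ?thesis unfolding defs using run.potential_descent by blast
qed

end
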